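(* Any quantum algorithm that, given quantum query access to a component mixer on a set of $n$-bit strings, decides with bounded error whether there is more than one component (the multiple components problem) must make $\Omega(2^{n/2})$ queries.
   Context: Let $n\ge 1$ and let $S\subseteq\{0,1\}^n$ be partitioned into nonempty sets (components) $S_1,\dots,S_c$. A component mixer on this partition is a family of one-to-one maps $M_i:S\to S$ indexed by $i$ in a finite nonempty set $\mathrm{Ind}_M$ of strings of length polynomial in $n$, such that: (i) for every $i$, every $a$ and every $x\in S_a$, $M_i(x)\in S_a$; (ii) for every $a$ and every $x\in S_a$, if $i$ is chosen uniformly at random from $\mathrm{Ind}_M$, then the total variation distance between the distribution of $M_i(x)$ and the uniform distribution on $S_a$ is at most $2^{-n-2}$. Quantum query access means each of the following can be done coherently in one query with failure probability at most $2^{-n}$: test membership in $S$ or $\mathrm{Ind}_M$; prepare the uniform superposition over $S$ or over $\mathrm{Ind}_M$, or measure the projector onto it; apply $\mathrm{CM}|\alpha,i,s\rangle=|\alpha,i,M_i^{\alpha}(s)\rangle$ for $\alpha\in\{-1,0,1\}$ (identity on invalid inputs). *)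

theory Defs
  imports Complex_Main "HOL-Library.Disjoint_Sets"
begin

type_synonym bitstr = "bool list"

definition bitstrs :: "nat \<Rightarrow> bitstr set" where
  "bitstrs k = {xs. length xs = k}"

text \<open>Total variation distance between the distribution of M_i(x) (i uniform in Ind)
  and the uniform distribution on the component C (both supported on C).\<close>
definition mixer_tv :: "bitstr set \<Rightarrow> (bitstr \<Rightarrow> bitstr \<Rightarrow> bitstr) \<Rightarrow> bitstr set \<Rightarrow> bitstr \<Rightarrow> real" where
  "mixer_tv Ind M C x =
     (1/2) * (\<Sum>y\<in>C. \<bar>real (card {i\<in>Ind. M i x = y}) / real (card Ind) - 1 / real (card C)\<bar>)"

definition component_mixer ::
  "nat \<Rightarrow> nat \<Rightarrow> bitstr set \<Rightarrow> bitstr set set \<Rightarrow> bitstr set \<Rightarrow> (bitstr \<Rightarrow> bitstr \<Rightarrow> bitstr) \<Rightarrow> bool" where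
  "component_mixer n m S P Ind M \<longleftrightarrow>
     S \<subseteq> bitstrs n \<and> S \<noteq> {} \<and> partition_on S P \<and>
     Ind \<subseteq> bitstrs m \<and> Ind \<noteq> {} \<and>
     (\<forall>i\<in>Ind. inj_on (M i) S \<and> (\<forall>C\<in>P. \<forall>x\<in>C. M i x \<in> C)) \<and>
     (\<forall>C\<in>P. \<forall>x\<in>C. mixer_tv Ind M C x \<le> 2 powr (- real n - 2))"

text \<open>An operator on the space with (finite) orthonormal basis B is given by its matrix
  K x y = <x|K|y>; a state is a function from basis elements to amplitudes.\<close>
definition apply_op :: "'b set \<Rightarrow> ('b \<Rightarrow> 'b \<Rightarrow> complex) \<Rightarrow> ('b \<Rightarrow> complex) \<Rightarrow> 'b \<Rightarrow> complex" where
  "apply_op B K \<psi> x = (\<Sum>y\<in>B. K x y * \<psi> y)"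

definition unitary_on :: "'b set \<Rightarrow> ('b \<Rightarrow> 'b \<Rightarrow> complex) \<Rightarrow> bool" where
  "unitary_on B U \<longleftrightarrow>
     (\<forall>x\<in>B. \<forall>y\<in>B. (\<Sum>k\<in>B. cnj (U k x) * U k y) = (if x = y then 1 else 0))"

definition delta :: "'a \<Rightarrow> 'a \<Rightarrow> complex" where
  "delta x y = (if x = y then 1 else 0)"

definition unif_amp :: "'a set \<Rightarrow> 'a \<Rightarrow> real" where
  "unif_amp A x = (if x \<in> A then 1 / sqrt (real (card A)) else 0)"

text \<open>Householder reflection on the space with basis X exchanging the unit vectors
  |z> and |A> (uniform superposition over A); identity if they coincide.
  Maps |z> to |A>: this is the canonical preparation unitary.\<close>
definition prep_kernel :: "'a set \<Rightarrow> 'a \<Rightarrow> 'a set \<Rightarrow> 'a \<Rightarrow> 'a \<Rightarrow> complex" where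
  "prep_kernel X z A x y =
     (let d = (\<lambda>u. (if u = z then 1 else 0) - unif_amp A u);
          nrm2 = (\<Sum>u\<in>X. (d u)^2)
      in delta x y - (if nrm2 = 0 then 0 else complex_of_real (2 * d x * d y / nrm2)))"

definition proj_kernel :: "'a set \<Rightarrow> 'a \<Rightarrow> 'a \<Rightarrow> complex" where
  "proj_kernel A x y = complex_of_real (unif_amp A x * unif_amp A y)"

text \<open>Query register basis elements (op, a, i, s, b): op \<in> {0..7} selects the operation
  (coherently, so superpositions/controlled uses are allowed), a \<in> {0,1,2} encodes
  alpha = a - 1, i is an m-bit index string, s an n-bit string, b an answer bit.\<close>
type_synonym qreg = "nat \<times> nat \<times> bitstr \<times> bitstr \<times> bool"

definition qbasis :: "nat \<Rightarrow> nat \<Rightarrow> qreg set" where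
  "qbasis n m = {..<8} \<times> {..<3} \<times> bitstrs m \<times> bitstrs n \<times> UNIV"

text \<open>M_i^alpha on s (alpha = a - 1), identity on invalid inputs.\<close>
definition mix_pow :: "bitstr set \<Rightarrow> bitstr set \<Rightarrow> (bitstr \<Rightarrow> bitstr \<Rightarrow> bitstr) \<Rightarrow> nat \<Rightarrow> bitstr \<Rightarrow> bitstr \<Rightarrow> bitstr" where
  "mix_pow S Ind M a i s =
     (if i \<in> Ind \<and> s \<in> S then
        (if a = 0 then the_inv_into S (M i) s else if a = 1 then s else M i s)
      else s)"

definition oracle_kernel ::
  "nat \<Rightarrow> nat \<Rightarrow> bitstr set \<Rightarrow> bitstr set \<Rightarrow> (bitstr \<Rightarrow> bitstr \<Rightarrow> bitstr) \<Rightarrow> qreg \<Rightarrow> qreg \<Rightarrow> complex" where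
  "oracle_kernel n m S Ind M q' q =
     (case q' of (op', a', i', s', b') \<Rightarrow> case q of (op, a, i, s, b) \<Rightarrow>
      if op' \<noteq> op then 0 else
      if op = 1 then delta (a', i', s', b') (a, i, s, b \<noteq> (s \<in> S))
      else if op = 2 then delta (a', i', s', b') (a, i, s, b \<noteq> (i \<in> Ind))
      else if op = 3 then delta (a', i', b') (a, i, b) * prep_kernel (bitstrs n) (replicate n False) S s' s
      else if op = 4 then delta (a', s', b') (a, s, b) * prep_kernel (bitstrs m) (replicate m False) Ind i' i
      else if op = 5 then delta (a', i') (a, i) *
          (proj_kernel S s' s * delta b' (\<not> b) + (delta s' s - proj_kernel S s' s) * delta b' b)
      else if op = 6 then delta (a', s') (a, s) *
          (proj_kernel Ind i' i * delta b' (\<not> b) + (delta i' i - proj_kernel Ind i' i) * delta b' b)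
      else if op = 7 then delta (a', i', s', b') (a, i, mix_pow S Ind M a i s, b)
      else delta (a', i', s', b') (a, i, s, b))"

definition full_basis :: "nat \<Rightarrow> nat \<Rightarrow> nat \<Rightarrow> (qreg \<times> nat) set" where
  "full_basis n m w = qbasis n m \<times> {..<w}"

definition full_oracle ::
  "nat \<Rightarrow> nat \<Rightarrow> bitstr set \<Rightarrow> bitstr set \<Rightarrow> (bitstr \<Rightarrow> bitstr \<Rightarrow> bitstr) \<Rightarrow> qreg \<times> nat \<Rightarrow> qreg \<times> nat \<Rightarrow> complex" where
  "full_oracle n m S Ind M x y =
     (if snd x = snd y then oracle_kernel n m S Ind M (fst x) (fst y) else 0)"

definition init_state :: "nat \<Rightarrow> nat \<Rightarrow> qreg \<times> nat \<Rightarrow> complex" where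
  "init_state n m x = (if x = ((0, 0, replicate m False, replicate n False, False), 0) then 1 else 0)"

fun run_state ::
  "nat \<Rightarrow> nat \<Rightarrow> nat \<Rightarrow> (nat \<Rightarrow> qreg \<times> nat \<Rightarrow> qreg \<times> nat \<Rightarrow> complex) \<Rightarrow>
   bitstr set \<Rightarrow> bitstr set \<Rightarrow> (bitstr \<Rightarrow> bitstr \<Rightarrow> bitstr) \<Rightarrow> nat \<Rightarrow> qreg \<times> nat \<Rightarrow> complex" where
  "run_state n m w U S Ind M 0 = apply_op (full_basis n m w) (U 0) (init_state n m)"
| "run_state n m w U S Ind M (Suc k) =
     apply_op (full_basis n m w) (U (Suc k))
       (apply_op (full_basis n m w) (full_oracle n m S Ind M) (run_state n m w U S Ind M k))"

definition accept_prob ::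
  "nat \<Rightarrow> nat \<Rightarrow> nat \<Rightarrow> nat \<Rightarrow> (nat \<Rightarrow> qreg \<times> nat \<Rightarrow> qreg \<times> nat \<Rightarrow> complex) \<Rightarrow> (qreg \<times> nat) set \<Rightarrow>
   bitstr set \<Rightarrow> bitstr set \<Rightarrow> (bitstr \<Rightarrow> bitstr \<Rightarrow> bitstr) \<Rightarrow> real" where
  "accept_prob n m w T U Acc S Ind M = (\<Sum>x\<in>Acc. (cmod (run_state n m w U S Ind M T x))^2)"

definition solves_multiple_components ::
  "nat \<Rightarrow> nat \<Rightarrow> nat \<Rightarrow> nat \<Rightarrow> (nat \<Rightarrow> qreg \<times> nat \<Rightarrow> qreg \<times> nat \<Rightarrow> complex) \<Rightarrow> (qreg \<times> nat) set \<Rightarrow> bool" where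
  "solves_multiple_components n m w T U Acc \<longleftrightarrow>
     0 < w \<and> (\<forall>k\<le>T. unitary_on (full_basis n m w) (U k)) \<and> Acc \<subseteq> full_basis n m w \<and>
     (\<forall>S P Ind M. component_mixer n m S P Ind M \<longrightarrow>
        (card P \<ge> 2 \<longrightarrow> accept_prob n m w T U Acc S Ind M \<ge> 2/3) \<and>
        (card P < 2 \<longrightarrow> accept_prob n m w T U Acc S Ind M \<le> 1/3))"

end

theory Submission
  imports Defs "HOL-Analysis.L2_Norm"
begin

(* Let top_half n be the n-bit strings with leading bit 1, and let the
   mixer M_i xor the last n-1 bits of such a string with the first n-1 bits of i (and fix
   every other string). On top_half n this mixes perfectly, so it is a one-component
   mixer. For every candidate z (leading bit 0, not the all-zero reference string),
   adding z as an isolated fixed point gives a two-component mixer on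
   insert z (top_half n), with the same mixer. The oracles of the two instances differ
   only in membership queries at z and in the preparation and reflection oracles for the
   uniform superposition, which moves by O(2^(-n/2)) when z is added.

   The hybrid argument bounds the distance of the final states
   by the sum over queries of this difference applied to the one-component run. The
   squared membership parts summed over all candidates are at most 4, so averaging over
   the 2^(n-1) - 1 candidates and comparing with the acceptance gap 1/3 yields
   T >= 2^(n/2) / 120, which gives the main theorem. *)

section \<open>Euclidean norm of amplitude vectors\<close>

definition vnorm :: "'b set \<Rightarrow> ('b \<Rightarrow> complex) \<Rightarrow> real" where
  "vnorm B \<phi> = L2_set (\<lambda>x. cmod (\<phi> x)) B"

lemma vnorm_nonneg [simp]: "0 \<le> vnorm B \<phi>"
  by (simp add: vnorm_def)

lemma vnorm_sq: "finite B \<Longrightarrow> (vnorm B \<phi>)\<^sup>2 = (\<Sum>x\<in>B. (cmod (\<phi> x))\<^sup>2)"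
  unfolding vnorm_def L2_set_def by (simp add: sum_nonneg)

lemma vnorm_cong: "(\<And>x. x \<in> B \<Longrightarrow> \<phi> x = \<psi> x) \<Longrightarrow> vnorm B \<phi> = vnorm B \<psi>"
  unfolding vnorm_def by (rule L2_set_cong) auto

lemma vnorm_triangle: "vnorm B (\<lambda>x. \<phi> x + \<psi> x) \<le> vnorm B \<phi> + vnorm B \<psi>"
proof -
  have "vnorm B (\<lambda>x. \<phi> x + \<psi> x) \<le> L2_set (\<lambda>x. cmod (\<phi> x) + cmod (\<psi> x)) B"
    unfolding vnorm_def by (rule L2_set_mono) (auto simp: norm_triangle_ineq)
  also have "\<dots> \<le> vnorm B \<phi> + vnorm B \<psi>"
    unfolding vnorm_def by (rule L2_set_triangle_ineq)
  finally show ?thesis .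
qed

lemma vnorm_real_scale: "vnorm X (\<lambda>s. complex_of_real (f s) * c) = L2_set f X * cmod c"
proof -
  have "vnorm X (\<lambda>s. complex_of_real (f s) * c) = L2_set (\<lambda>s. \<bar>f s\<bar>) X * cmod c"
    unfolding vnorm_def by (simp add: norm_mult L2_set_left_distrib)
  then show ?thesis by (simp add: L2_set_def)
qed

lemma cmod_real_inner_le: "cmod (\<Sum>s\<in>X. complex_of_real (f s) * \<psi> s) \<le> L2_set f X * vnorm X \<psi>"
proof -
  have "cmod (\<Sum>s\<in>X. complex_of_real (f s) * \<psi> s) \<le> (\<Sum>s\<in>X. \<bar>f s\<bar> * \<bar>cmod (\<psi> s)\<bar>)"
    by (rule order_trans[OF norm_sum]) (simp add: norm_mult)
  also have "\<dots> \<le> L2_set f X * L2_set (\<lambda>s. cmod (\<psi> s)) X"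
    by (rule L2_set_mult_ineq)
  finally show ?thesis by (simp add: vnorm_def)
qed

lemma apply_op_diff: "apply_op B K (\<lambda>x. \<phi> x - \<psi> x) x = apply_op B K \<phi> x - apply_op B K \<psi> x"
  unfolding apply_op_def by (simp add: sum_subtractf right_diff_distrib)

lemma unitary_preserves_vnorm:
  assumes fin: "finite B" and U: "unitary_on B U"
  shows "vnorm B (apply_op B U \<phi>) = vnorm B \<phi>"
proof -
  have "complex_of_real ((vnorm B (apply_op B U \<phi>))\<^sup>2)
      = (\<Sum>x\<in>B. cnj (apply_op B U \<phi> x) * apply_op B U \<phi> x)"
    unfolding vnorm_sq[OF fin] of_real_sum
    by (intro sum.cong refl) (metis complex_norm_square mult.commute)
  also have "\<dots> = (\<Sum>x\<in>B. \<Sum>y'\<in>B. \<Sum>y\<in>B. (\<phi> y * cnj (\<phi> y')) * (cnj (U x y') * U x y))"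
    unfolding apply_op_def cnj_sum sum_product by (intro sum.cong refl) (simp add: mult_ac)
  also have "\<dots> = (\<Sum>y'\<in>B. \<Sum>y\<in>B. \<Sum>x\<in>B. (\<phi> y * cnj (\<phi> y')) * (cnj (U x y') * U x y))"
    by (subst sum.swap, rule sum.cong[OF refl], rule sum.swap)
  also have "\<dots> = (\<Sum>y'\<in>B. \<Sum>y\<in>B. (\<phi> y * cnj (\<phi> y')) * (\<Sum>x\<in>B. cnj (U x y') * U x y))"
    by (simp only: sum_distrib_left)
  also have "\<dots> = (\<Sum>y'\<in>B. \<Sum>y\<in>B. (\<phi> y * cnj (\<phi> y')) * (if y' = y then 1 else 0))"
    using U unfolding unitary_on_def by (intro sum.cong refl) auto
  also have "\<dots> = (\<Sum>y'\<in>B. cnj (\<phi> y') * \<phi> y')"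
    by (intro sum.cong refl) (simp add: fin if_distrib mult.commute cong: if_cong)
  also have "\<dots> = complex_of_real ((vnorm B \<phi>)\<^sup>2)"
    unfolding vnorm_sq[OF fin] of_real_sum
    by (intro sum.cong refl) (metis complex_norm_square mult.commute)
  finally show ?thesis
    by (metis of_real_eq_iff power2_eq_imp_eq vnorm_nonneg)
qed

section \<open>Criteria for unitarity\<close>

lemma unitary_on_perm:
  assumes fin: "finite X" and inj: "inj_on f X" and into: "f ` X \<subseteq> X"
    and K: "\<And>x x'. x \<in> X \<Longrightarrow> x' \<in> X \<Longrightarrow> K x' x = (if x' = f x then 1 else 0)"
  shows "unitary_on X K"
  unfolding unitary_on_def
proof (intro ballI)
  fix x y assume x: "x \<in> X" and y: "y \<in> X"
  have "(\<Sum>k\<in>X. cnj (K k x) * K k y) = (\<Sum>k\<in>X. if k = f x then (if f x = f y then 1 else 0) else 0)"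
    using x y by (intro sum.cong refl) (auto simp: K)
  also have "\<dots> = (if x = y then 1 else 0)"
    using fin x y into inj by (auto dest: inj_onD)
  finally show "(\<Sum>k\<in>X. cnj (K k x) * K k y) = (if x = y then 1 else 0)" .
qed

lemma unitary_on_blocks:
  assumes fin: "finite B"
    and off: "\<And>x y. x \<in> B \<Longrightarrow> y \<in> B \<Longrightarrow> label x \<noteq> label y \<Longrightarrow> K x y = 0"
    and blocks: "\<And>c. unitary_on {x \<in> B. label x = c} K"
  shows "unitary_on B K"
  unfolding unitary_on_def
proof (intro ballI)
  fix x y assume x: "x \<in> B" and y: "y \<in> B"
  let ?F = "{k \<in> B. label k = label x}"
  have "(\<Sum>k\<in>B. cnj (K k x) * K k y) = (\<Sum>k\<in>?F. cnj (K k x) * K k y)"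
    using fin x by (intro sum.mono_neutral_right) (auto simp: off)
  also have "\<dots> = (if x = y then 1 else 0)"
  proof (cases "label x = label y")
    case True
    then show ?thesis using blocks[of "label x"] x y unfolding unitary_on_def by auto
  next
    case False
    then show ?thesis using y by (auto simp: off intro!: sum.neutral)
  qed
  finally show "(\<Sum>k\<in>B. cnj (K k x) * K k y) = (if x = y then 1 else 0)" .
qed

lemma unitary_on_tensor_id:
  assumes finR: "finite R" and finX: "finite X" and e: "bij_betw e (R \<times> X) B"
    and V: "unitary_on X V"
    and K: "\<And>r r' x x'. r \<in> R \<Longrightarrow> r' \<in> R \<Longrightarrow> x \<in> X \<Longrightarrow> x' \<in> X \<Longrightarrow>
              K (e (r', x')) (e (r, x)) = (if r' = r then V x' x else 0)"
  shows "unitary_on B K"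
  unfolding unitary_on_def
proof (intro ballI)
  fix p q assume "p \<in> B" "q \<in> B"
  then obtain r x r2 y where rx: "r \<in> R" "x \<in> X" "p = e (r, x)" and ry: "r2 \<in> R" "y \<in> X" "q = e (r2, y)"
    using e unfolding bij_betw_def by auto
  have inj: "p = q \<longleftrightarrow> (r, x) = (r2, y)"
    using e rx ry unfolding bij_betw_def by (auto dest: inj_onD)
  have "(\<Sum>k\<in>B. cnj (K k p) * K k q) = (\<Sum>(r', x')\<in>R \<times> X. cnj (K (e (r', x')) p) * K (e (r', x')) q)"
    using sum.reindex_bij_betw[OF e, of "\<lambda>k. cnj (K k p) * K k q"] by (simp add: case_prod_beta)
  also have "\<dots> = (\<Sum>r'\<in>R. \<Sum>x'\<in>X. cnj (K (e (r', x')) p) * K (e (r', x')) q)"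
    by (simp add: sum.cartesian_product)
  also have "\<dots> = (\<Sum>r'\<in>R. if r' = r \<and> r' = r2 then (\<Sum>x'\<in>X. cnj (V x' x) * V x' y) else 0)"
    using rx ry by (intro sum.cong refl) (auto simp: K intro!: sum.neutral)
  also have "\<dots> = (if r = r2 then (\<Sum>x'\<in>X. cnj (V x' x) * V x' y) else 0)"
    using finR rx ry by (simp add: sum.delta cong: conj_cong)
  also have "\<dots> = (if p = q then 1 else 0)"
    using V rx ry unfolding inj unitary_on_def by auto
  finally show "(\<Sum>k\<in>B. cnj (K k p) * K k q) = (if p = q then 1 else 0)" .
qed

lemma unitary_on_real:
  assumes "\<And>x y. x \<in> X \<Longrightarrow> y \<in> X \<Longrightarrow> (\<Sum>k\<in>X. h k x * h k y) = (if x = y then 1 else 0)"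
  shows "unitary_on X (\<lambda>x y. complex_of_real (h x y))"
  using assms unfolding unitary_on_def by (simp flip: of_real_mult of_real_sum)

lemma householder_orthogonal:
  fixes d :: "'a \<Rightarrow> real"
  assumes fin: "finite X" and x: "x \<in> X" and y: "y \<in> X"
  defines "nrm2 \<equiv> (\<Sum>u\<in>X. (d u)\<^sup>2)"
  defines "h \<equiv> \<lambda>a b. (if a = b then 1 else 0) - (if nrm2 = 0 then 0 else 2 * d a * d b / nrm2)"
  shows "(\<Sum>k\<in>X. h k x * h k y) = (if x = y then 1 else 0)"
proof (cases "nrm2 = 0")
  case True
  then show ?thesis using fin x y by (simp add: h_def if_distrib[of "\<lambda>v. v * _"] cong: if_cong)
next
  case False
  define c where "c = 2 / nrm2"
  define dl where "dl = (\<lambda>(a::'a) b. if a = b then 1 else (0::real))"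
  have h: "h a b = dl a b - c * d a * d b" for a b
    using False by (simp add: h_def c_def dl_def)
  have expand: "h k x * h k y = dl k x * dl k y - c * d y * (dl k x * d k) - c * d x * (dl k y * d k)
       + c * c * d x * d y * (d k)\<^sup>2" for k
    unfolding h by (simp add: algebra_simps power2_eq_square)
  have "(\<Sum>k\<in>X. h k x * h k y) =
      (\<Sum>k\<in>X. dl k x * dl k y) - c * d y * (\<Sum>k\<in>X. dl k x * d k)
      - c * d x * (\<Sum>k\<in>X. dl k y * d k) + c * c * d x * d y * nrm2"
    unfolding expand nrm2_def by (simp add: sum.distrib sum_subtractf sum_distrib_left)
  also have "\<dots> = dl x y - c * d y * d x - c * d x * d y + 2 * c * d x * d y"
  proof -
    have "(\<Sum>k\<in>X. dl k x * dl k y) = dl x y" "(\<Sum>k\<in>X. dl k x * d k) = d x"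
      "(\<Sum>k\<in>X. dl k y * d k) = d y" "c * c * d x * d y * nrm2 = 2 * c * d x * d y"
      using fin x y False by (auto simp: dl_def c_def if_distrib[of "\<lambda>v. v * _"] cong: if_cong)
    then show ?thesis by simp
  qed
  finally show ?thesis by (simp add: dl_def)
qed

lemma prep_kernel_unitary:
  assumes fin: "finite X"
  shows "unitary_on X (prep_kernel X z A)"
proof -
  define d where "d = (\<lambda>u. (if u = z then 1 else 0) - unif_amp A u)"
  define nrm2 where "nrm2 = (\<Sum>u\<in>X. (d u)\<^sup>2)"
  define h where "h = (\<lambda>a b. (if a = b then 1 else 0) - (if nrm2 = 0 then 0 else 2 * d a * d b / nrm2))"
  have "prep_kernel X z A = (\<lambda>a b. complex_of_real (h a b))"
    unfolding prep_kernel_def h_def nrm2_def d_def delta_def Let_def by (simp add: fun_eq_iff)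
  moreover have "unitary_on X (\<lambda>a b. complex_of_real (h a b))"
    unfolding h_def nrm2_def by (rule unitary_on_real, rule householder_orthogonal[OF fin])
  ultimately show ?thesis by simp
qed

lemma unif_amp_sq_sum:
  assumes "finite X" "A \<subseteq> X" "A \<noteq> {}"
  shows "(\<Sum>k\<in>X. (unif_amp A k)\<^sup>2) = 1"
proof -
  have finA: "finite A" using assms finite_subset by blast
  have "(\<Sum>k\<in>X. (unif_amp A k)\<^sup>2) = (\<Sum>k\<in>A. 1 / real (card A))"
    using assms by (intro sum.mono_neutral_cong_right) (auto simp: unif_amp_def power_divide)
  then show ?thesis using finA assms(3) by simp
qed

text \<open>The kernel of the projector-controlled bit flip of the reflection oracle: the answer
  bit is flipped exactly on the component along the uniform superposition over \<open>A\<close>.\<close>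
definition proj_flip :: "'a set \<Rightarrow> 'a \<times> bool \<Rightarrow> 'a \<times> bool \<Rightarrow> complex" where
  "proj_flip A = (\<lambda>(s', b') (s, b). proj_kernel A s' s * delta b' (\<not> b) + (delta s' s - proj_kernel A s' s) * delta b' b)"

lemma controlled_flip_orthogonal:
  fixes p :: "'a \<Rightarrow> 'a \<Rightarrow> real"
  assumes fin: "finite X"
    and sym: "\<And>a c. p a c = p c a"
    and idem: "\<And>a c. (\<Sum>k\<in>X. p k a * p k c) = p a c"
    and x: "x \<in> X \<times> UNIV" and y: "y \<in> X \<times> UNIV"
  defines "h \<equiv> \<lambda>(s', b'::bool) (s, b). p s' s * (if b' = (\<not> b) then 1 else 0)
                   + ((if s' = s then 1 else 0) - p s' s) * (if b' = b then 1 else 0)"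
  shows "(\<Sum>k\<in>X \<times> UNIV. h k x * h k y) = (if x = y then 1 else 0)"
proof -
  obtain s b s2 b2 where xy: "x = (s, b)" "y = (s2, b2)" and s: "s \<in> X" "s2 \<in> X"
    using x y by auto
  define dl where "dl = (\<lambda>(a::'a) c. if a = c then 1 else (0::real))"
  have sums: "(\<Sum>k\<in>X. dl k s * p k s2) = p s s2" "(\<Sum>k\<in>X. p k s * dl k s2) = p s2 s"
    "(\<Sum>k\<in>X. dl k s * dl k s2) = dl s s2"
    using fin s by (auto simp: dl_def if_distrib[of "\<lambda>v. v * _"] if_distrib[of "\<lambda>v. _ * v"]
        cong: if_cong)
  have "(\<Sum>k\<in>X \<times> UNIV. h k x * h k y) = (\<Sum>s'\<in>X. \<Sum>b'\<in>UNIV. h (s', b') x * h (s', b') y)"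
    by (simp add: sum.cartesian_product)
  also have "\<dots> = (if b = b2
      then (\<Sum>s'\<in>X. p s' s * p s' s2 + (dl s' s - p s' s) * (dl s' s2 - p s' s2))
      else (\<Sum>s'\<in>X. p s' s * (dl s' s2 - p s' s2) + (dl s' s - p s' s) * p s' s2))"
    by (cases b; cases b2) (simp_all add: h_def xy dl_def UNIV_bool add.commute)
  also have "\<dots> = (if b = b2 then dl s s2 else 0)"
    using sums idem[of s s2] sym[of s s2]
    by (simp add: algebra_simps sum.distrib sum_subtractf sum_distrib_left[symmetric])
  finally show ?thesis by (auto simp: xy dl_def)
qed

lemma proj_flip_unitary:
  assumes fin: "finite X" and AX: "A \<subseteq> X" and A: "A \<noteq> {}"
  shows "unitary_on (X \<times> UNIV) (proj_flip A)"
proof -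
  define p where "p = (\<lambda>a c. unif_amp A a * unif_amp A c)"
  have idem: "(\<Sum>k\<in>X. p k a * p k c) = p a c" for a c
  proof -
    have "(\<Sum>k\<in>X. p k a * p k c) = p a c * (\<Sum>k\<in>X. (unif_amp A k)\<^sup>2)"
      by (simp add: p_def sum_distrib_left power2_eq_square mult_ac)
    then show ?thesis using unif_amp_sq_sum[OF fin AX A] by simp
  qed
  define h where "h = (\<lambda>(s', b'::bool) (s, b). p s' s * (if b' = (\<not> b) then 1 else 0)
                   + ((if s' = s then 1 else 0) - p s' s) * (if b' = b then 1 else 0))"
  have "proj_flip A = (\<lambda>x y. complex_of_real (h x y))"
    by (simp add: fun_eq_iff proj_flip_def proj_kernel_def delta_def p_def h_def)
  moreover have "unitary_on (X \<times> UNIV) (\<lambda>x y. complex_of_real (h x y))"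
  proof (rule unitary_on_real)
    fix x y :: "'a \<times> bool" assume x: "x \<in> X \<times> UNIV" and y: "y \<in> X \<times> UNIV"
    show "(\<Sum>k\<in>X \<times> UNIV. h k x * h k y) = (if x = y then 1 else 0)"
      unfolding h_def by (rule controlled_flip_orthogonal[OF fin _ idem x y]) (simp add: p_def)
  qed
  ultimately show ?thesis by simp
qed

section \<open>The query oracle is unitary\<close>

lemma mem_bitstrs [simp]: "xs \<in> bitstrs k \<longleftrightarrow> length xs = k"
  by (simp add: bitstrs_def)

lemma finite_bitstrs [simp]: "finite (bitstrs k)"
  using finite_lists_length_eq[of "UNIV :: bool set" k] by (simp add: bitstrs_def)

lemma card_bitstrs: "card (bitstrs k) = 2 ^ k"
  using card_lists_length_eq[of "UNIV :: bool set" k] by (simp add: bitstrs_def)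

lemma qbasis_mem [simp]:
  "(c, a, i, s, b) \<in> qbasis n m \<longleftrightarrow> c < 8 \<and> a < 3 \<and> length i = m \<and> length s = n"
  by (simp add: qbasis_def)

lemma finite_qbasis [simp]: "finite (qbasis n m)"
  by (simp add: qbasis_def)

lemma full_basis_mem [simp]: "(q, j) \<in> full_basis n m w \<longleftrightarrow> q \<in> qbasis n m \<and> j < w"
  by (simp add: full_basis_def)

lemma finite_full_basis [simp]: "finite (full_basis n m w)"
  by (simp add: full_basis_def)

text \<open>The operations 0, 1, 2 and 7 of the oracle (identity, the two membership tests and
  the mixer) permute the basis states; this is the permutation.\<close>
definition oracle_perm :: "bitstr set \<Rightarrow> bitstr set \<Rightarrow> (bitstr \<Rightarrow> bitstr \<Rightarrow> bitstr) \<Rightarrow> qreg \<Rightarrow> qreg" where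
  "oracle_perm S Ind M = (\<lambda>(c, a, i, s, b).
     if c = 1 then (c, a, i, s, b \<noteq> (s \<in> S))
     else if c = 2 then (c, a, i, s, b \<noteq> (i \<in> Ind))
     else if c = 7 then (c, a, i, mix_pow S Ind M a i s, b)
     else (c, a, i, s, b))"

text \<open>The remaining operations are single-register unitaries: the two preparations and the
  two reflections, acting on the string, resp. the index register (and the answer bit).\<close>
definition is_register_op :: "nat \<Rightarrow> bool" where
  "is_register_op c \<longleftrightarrow> c \<in> {3, 4, 5, 6}"

lemma oracle_kernel_perm:
  assumes "\<not> is_register_op (fst q)"
  shows "oracle_kernel n m S Ind M q' q = (if q' = oracle_perm S Ind M q then 1 else 0)"
  using assms by (cases q; cases q') (auto simp: oracle_kernel_def oracle_perm_def delta_def is_register_op_def)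

lemma oracle_perm_block_unitary:
  assumes mix: "\<And>a i. a < 3 \<Longrightarrow> i \<in> bitstrs m \<Longrightarrow>
      mix_pow S Ind M a i ` bitstrs n \<subseteq> bitstrs n \<and> inj_on (mix_pow S Ind M a i) (bitstrs n)"
  shows "unitary_on {q \<in> qbasis n m. \<not> is_register_op (fst q)} (oracle_kernel n m S Ind M)"
proof (rule unitary_on_perm[where f = "oracle_perm S Ind M"])
  let ?P = "{q \<in> qbasis n m. \<not> is_register_op (fst q)}"
  show "oracle_perm S Ind M ` ?P \<subseteq> ?P"
  proof (rule image_subsetI)
    fix q assume "q \<in> ?P"
    moreover obtain c a i s b where "q = (c, a, i, s, b)" by (cases q) auto
    ultimately show "oracle_perm S Ind M q \<in> ?P"
      using mix[of a i] by (auto simp: oracle_perm_def image_subset_iff)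
  qed
  show "inj_on (oracle_perm S Ind M) ?P"
  proof (rule inj_onI)
    fix q q' assume "q \<in> ?P" "q' \<in> ?P" and eq: "oracle_perm S Ind M q = oracle_perm S Ind M q'"
    moreover obtain c a i s b where q: "q = (c, a, i, s, b)" by (cases q) auto
    moreover obtain c' a' i' s' b' where q': "q' = (c', a', i', s', b')" by (cases q') auto
    ultimately have len: "length i = m" "length s = n" "length s' = n"
      and same: "c' = c" "a' = a" "i' = i" "a < 3"
      by (auto simp: oracle_perm_def split: if_splits)
    show "q = q'"
    proof (cases "c = 7")
      case True
      then have "mix_pow S Ind M a i s = mix_pow S Ind M a i s'" "b = b'"
        using eq same by (auto simp: q q' oracle_perm_def)
      then show ?thesis using mix[of a i] len same by (auto simp: q q' dest: inj_onD)
    next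
      case False
      then show ?thesis using eq same by (auto simp: q q' oracle_perm_def split: if_splits)
    qed
  qed
qed (auto simp: oracle_kernel_perm)

lemma oracle_prep_blocks_unitary:
  shows "unitary_on {q \<in> qbasis n m. fst q = 3} (oracle_kernel n m S Ind M)"
    and "unitary_on {q \<in> qbasis n m. fst q = 4} (oracle_kernel n m S Ind M)"
proof -
  show "unitary_on {q \<in> qbasis n m. fst q = 3} (oracle_kernel n m S Ind M)"
  proof (rule unitary_on_tensor_id[where e = "\<lambda>((a, i, b), s). (3, a, i, s, b)"
        and R = "{..<3} \<times> bitstrs m \<times> UNIV" and X = "bitstrs n"
        and V = "prep_kernel (bitstrs n) (replicate n False) S"])
    show "bij_betw (\<lambda>((a, i, b), s). (3, a, i, s, b)) (({..<3} \<times> bitstrs m \<times> UNIV) \<times> bitstrs n)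
        {q \<in> qbasis n m. fst q = 3}"
      by (rule bij_betwI[where g = "\<lambda>(c, a, i, s, b). ((a, i, b), s)"]) auto
  qed (auto simp: prep_kernel_unitary oracle_kernel_def delta_def split: prod.splits)
  show "unitary_on {q \<in> qbasis n m. fst q = 4} (oracle_kernel n m S Ind M)"
  proof (rule unitary_on_tensor_id[where e = "\<lambda>((a, s, b), i). (4, a, i, s, b)"
        and R = "{..<3} \<times> bitstrs n \<times> UNIV" and X = "bitstrs m"
        and V = "prep_kernel (bitstrs m) (replicate m False) Ind"])
    show "bij_betw (\<lambda>((a, s, b), i). (4, a, i, s, b)) (({..<3} \<times> bitstrs n \<times> UNIV) \<times> bitstrs m)
        {q \<in> qbasis n m. fst q = 4}"
      by (rule bij_betwI[where g = "\<lambda>(c, a, i, s, b). ((a, s, b), i)"]) auto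
  qed (auto simp: prep_kernel_unitary oracle_kernel_def delta_def split: prod.splits)
qed

lemma oracle_reflect_blocks_unitary:
  assumes S: "S \<subseteq> bitstrs n" "S \<noteq> {}" and Ind: "Ind \<subseteq> bitstrs m" "Ind \<noteq> {}"
  shows "unitary_on {q \<in> qbasis n m. fst q = 5} (oracle_kernel n m S Ind M)"
    and "unitary_on {q \<in> qbasis n m. fst q = 6} (oracle_kernel n m S Ind M)"
proof -
  show "unitary_on {q \<in> qbasis n m. fst q = 5} (oracle_kernel n m S Ind M)"
  proof (rule unitary_on_tensor_id[where e = "\<lambda>((a, i), (s, b)). (5, a, i, s, b)"
        and R = "{..<3} \<times> bitstrs m" and X = "bitstrs n \<times> UNIV" and V = "proj_flip S"])
    show "bij_betw (\<lambda>((a, i), (s, b)). (5, a, i, s, b)) (({..<3} \<times> bitstrs m) \<times> bitstrs n \<times> UNIV)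
        {q \<in> qbasis n m. fst q = 5}"
      by (rule bij_betwI[where g = "\<lambda>(c, a, i, s, b). ((a, i), (s, b))"]) auto
    show "unitary_on (bitstrs n \<times> UNIV) (proj_flip S)"
      using S by (simp add: proj_flip_unitary)
  qed (auto simp: oracle_kernel_def delta_def proj_flip_def split: prod.splits)
  show "unitary_on {q \<in> qbasis n m. fst q = 6} (oracle_kernel n m S Ind M)"
  proof (rule unitary_on_tensor_id[where e = "\<lambda>((a, s), (i, b)). (6, a, i, s, b)"
        and R = "{..<3} \<times> bitstrs n" and X = "bitstrs m \<times> UNIV" and V = "proj_flip Ind"])
    show "bij_betw (\<lambda>((a, s), (i, b)). (6, a, i, s, b)) (({..<3} \<times> bitstrs n) \<times> bitstrs m \<times> UNIV)
        {q \<in> qbasis n m. fst q = 6}"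
      by (rule bij_betwI[where g = "\<lambda>(c, a, i, s, b). ((a, s), (i, b))"]) auto
    show "unitary_on (bitstrs m \<times> UNIV) (proj_flip Ind)"
      using Ind by (simp add: proj_flip_unitary)
  qed (auto simp: oracle_kernel_def delta_def proj_flip_def split: prod.splits)
qed

lemma oracle_kernel_unitary:
  assumes S: "S \<subseteq> bitstrs n" "S \<noteq> {}" and Ind: "Ind \<subseteq> bitstrs m" "Ind \<noteq> {}"
    and mix: "\<And>a i. a < 3 \<Longrightarrow> i \<in> bitstrs m \<Longrightarrow>
      mix_pow S Ind M a i ` bitstrs n \<subseteq> bitstrs n \<and> inj_on (mix_pow S Ind M a i) (bitstrs n)"
  shows "unitary_on (qbasis n m) (oracle_kernel n m S Ind M)"
proof (rule unitary_on_blocks[where label = "\<lambda>q. if is_register_op (fst q) then fst q else 0"])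
  fix x y :: qreg assume "(if is_register_op (fst x) then fst x else 0) \<noteq>
                          (if is_register_op (fst y) then fst y else 0)"
  then have "fst x \<noteq> fst y" by (metis (full_types))
  then show "oracle_kernel n m S Ind M x y = 0"
    by (cases x; cases y) (simp add: oracle_kernel_def)
next
  fix c :: nat
  let ?Q = "{q \<in> qbasis n m. (if is_register_op (fst q) then fst q else 0) = c}"
  show "unitary_on ?Q (oracle_kernel n m S Ind M)"
  proof (cases "is_register_op c")
    case True
    then have Q: "?Q = {q \<in> qbasis n m. fst q = c}" by (auto simp: is_register_op_def)
    show ?thesis
      unfolding Q using True oracle_prep_blocks_unitary oracle_reflect_blocks_unitary[OF S Ind]
      by (auto simp: is_register_op_def)
  next
    case False
    show ?thesis
    proof (cases "c = 0")
      case True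
      then have Q: "?Q = {q \<in> qbasis n m. \<not> is_register_op (fst q)}"
        by (auto simp: is_register_op_def)
      show ?thesis unfolding Q by (rule oracle_perm_block_unitary[OF mix])
    next
      case False
      then have Q: "?Q = {}" using \<open>\<not> is_register_op c\<close> by auto
      show ?thesis unfolding Q unitary_on_def by simp
    qed
  qed
qed simp

lemma full_oracle_unitary:
  assumes "unitary_on (qbasis n m) (oracle_kernel n m S Ind M)"
  shows "unitary_on (full_basis n m w) (full_oracle n m S Ind M)"
proof (rule unitary_on_tensor_id[where e = "\<lambda>(j, q). (q, j)" and R = "{..<w}" and X = "qbasis n m"])
  show "bij_betw (\<lambda>(j, q). (q, j)) ({..<w} \<times> qbasis n m) (full_basis n m w)"
    by (rule bij_betwI[where g = "\<lambda>(q, j). (j, q)"]) (auto simp: full_basis_def)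
qed (use assms in \<open>auto simp: full_oracle_def\<close>)

section \<open>The hard instances\<close>

definition top_half :: "nat \<Rightarrow> bitstr set" where
  "top_half n = {s. length s = n \<and> s \<noteq> [] \<and> hd s}"

text \<open>Candidates for an additional isolated point: leading bit 0, but not the all-zero
  string (which the preparation oracle uses as its reference state).\<close>
definition candidates :: "nat \<Rightarrow> bitstr set" where
  "candidates n = {s. length s = n \<and> s \<noteq> [] \<and> \<not> hd s \<and> tl s \<noteq> replicate (n - 1) False}"

definition xor_bits :: "bool list \<Rightarrow> bool list \<Rightarrow> bool list" where
  "xor_bits t i = map2 (\<noteq>) t i"

definition xor_mixer :: "bitstr \<Rightarrow> bitstr \<Rightarrow> bitstr" where
  "xor_mixer i s = (if s \<noteq> [] \<and> hd s then True # xor_bits (tl s) i else s)"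

lemma top_half_image: "n \<ge> 1 \<Longrightarrow> top_half n = Cons True ` bitstrs (n - 1)"
  unfolding top_half_def by (auto simp: image_iff neq_Nil_conv)

lemma card_top_half: "n \<ge> 1 \<Longrightarrow> card (top_half n) = 2 ^ (n - 1)"
  by (simp add: top_half_image card_image card_bitstrs)

lemma top_half_subset: "top_half n \<subseteq> bitstrs n"
  by (auto simp: top_half_def)

lemma top_half_nonempty: "n \<ge> 1 \<Longrightarrow> top_half n \<noteq> {}"
  using card_top_half[of n] by auto

lemma card_candidates: "n \<ge> 1 \<Longrightarrow> card (candidates n) = 2 ^ (n - 1) - 1"
proof -
  assume "n \<ge> 1"
  then have "candidates n = Cons False ` (bitstrs (n - 1) - {replicate (n - 1) False})"
    unfolding candidates_def by (auto simp: image_iff neq_Nil_conv)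
  then show ?thesis by (simp add: card_image card_bitstrs card_Diff_singleton)
qed

lemma candidate_length: "z \<in> candidates n \<Longrightarrow> length z = n"
  by (auto simp: candidates_def)

lemma instance_strings: "top_half n \<union> candidates n \<subseteq> bitstrs n"
  by (auto simp: top_half_def candidates_def)

lemma candidate_not_top: "z \<in> candidates n \<Longrightarrow> z \<notin> top_half n"
  by (auto simp: candidates_def top_half_def)

lemma zero_not_top: "replicate n False \<notin> top_half n"
  by (cases n) (auto simp: top_half_def)

lemma zero_not_candidate: "replicate n False \<notin> candidates n"
  by (cases n) (auto simp: candidates_def)

lemma xor_bits_involutive: "length t \<le> length i \<Longrightarrow> xor_bits (xor_bits t i) i = t"
  unfolding xor_bits_def
proof (induction t arbitrary: i)
  case (Cons x t) then show ?case by (cases i) auto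
qed simp

lemma xor_bits_eq_iff:
  "length t = k \<Longrightarrow> length t' = k \<Longrightarrow> k \<le> length i \<Longrightarrow>
   xor_bits t i = t' \<longleftrightarrow> take k i = xor_bits t t'"
  unfolding xor_bits_def
proof (induction t arbitrary: i t' k)
  case (Cons x t)
  then obtain y i' x' t'' where "i = y # i'" "t' = x' # t''" "k = Suc (length t)"
    by (cases i; cases t') auto
  with Cons show ?case by auto
qed simp

lemma xor_mixer_involution:
  assumes S: "top_half n \<subseteq> S" "S \<subseteq> top_half n \<union> candidates n"
    and i: "length i \<ge> n - 1" and s: "s \<in> S"
  shows "xor_mixer i s \<in> S \<and> xor_mixer i (xor_mixer i s) = s"
proof (cases "s \<in> top_half n")
  case True
  then obtain t where t: "s = True # t" "n = Suc (length t)"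
    by (cases s) (auto simp: top_half_def)
  have "True # xor_bits t i \<in> top_half n"
    using i t by (simp add: top_half_def xor_bits_def)
  then show ?thesis
    using S t i xor_bits_involutive[of t i] by (auto simp: xor_mixer_def)
next
  case False
  then have "xor_mixer i s = s" using S s by (auto simp: candidates_def xor_mixer_def)
  then show ?thesis using s by simp
qed

text \<open>On an instance, \<open>M\<^sub>i\<^sup>\<alpha>\<close> is the xor mixer on the top half for \<open>\<alpha> = \<plusminus>1\<close> (the mixer is
  its own inverse there) and the identity otherwise.\<close>
lemma mix_pow_instance:
  assumes S: "top_half n \<subseteq> S" "S \<subseteq> top_half n \<union> candidates n" and mn: "n \<le> m"
  shows "mix_pow S (bitstrs m) xor_mixer a i s =
           (if length i = m \<and> a \<noteq> 1 \<and> s \<in> top_half n then xor_mixer i s else s)"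
proof (cases "length i = m \<and> s \<in> S")
  case True
  then have inv: "xor_mixer i t \<in> S \<and> xor_mixer i (xor_mixer i t) = t" if "t \<in> S" for t
    using xor_mixer_involution[OF S _ that] mn by simp
  then have "inj_on (xor_mixer i) S" by (metis inj_onI)
  then have "the_inv_into S (xor_mixer i) s = xor_mixer i s"
    using inv True by (intro the_inv_into_f_eq) auto
  moreover have "s \<notin> top_half n \<Longrightarrow> xor_mixer i s = s"
    using True S by (auto simp: candidates_def xor_mixer_def)
  ultimately show ?thesis using True by (auto simp: mix_pow_def)
next
  case False
  then show ?thesis using S by (auto simp: mix_pow_def)
qed

lemma instance_oracle_unitary:
  assumes S: "top_half n \<subseteq> S" "S \<subseteq> top_half n \<union> candidates n" and n: "n \<ge> 1" and mn: "n \<le> m"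
  shows "unitary_on (full_basis n m w) (full_oracle n m S (bitstrs m) xor_mixer)"
proof (intro full_oracle_unitary oracle_kernel_unitary)
  show "S \<subseteq> bitstrs n" using S(2) instance_strings by (rule order_trans)
  show "S \<noteq> {}" using S top_half_nonempty[OF n] by auto
  show "bitstrs m \<noteq> {}" using mem_bitstrs[of "replicate m False" m] by (metis empty_iff length_replicate)
  fix a :: nat and i assume i: "i \<in> bitstrs m"
  let ?f = "mix_pow S (bitstrs m) xor_mixer a i"
  have top: "xor_mixer i s \<in> top_half n \<and> xor_mixer i (xor_mixer i s) = s" if "s \<in> top_half n" for s
    using xor_mixer_involution[of n "top_half n" i s] that i mn by simp
  have f: "?f s = (if a \<noteq> 1 \<and> s \<in> top_half n then xor_mixer i s else s)" for s
    using mix_pow_instance[OF S mn] i by simp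
  have "?f (?f s) = s" for s
    using top unfolding f by auto
  then have "inj_on ?f (bitstrs n)" by (metis inj_onI)
  moreover have "?f ` bitstrs n \<subseteq> bitstrs n"
    using top top_half_subset unfolding f by auto
  ultimately show "?f ` bitstrs n \<subseteq> bitstrs n \<and> inj_on ?f (bitstrs n)" by simp
qed simp

lemma card_prefix_class:
  assumes "length c = k" "k \<le> m"
  shows "card {i \<in> bitstrs m. take k i = c} = 2 ^ (m - k)"
proof -
  have "{i \<in> bitstrs m. take k i = c} = (\<lambda>r. c @ r) ` bitstrs (m - k)"
  proof (intro set_eqI iffI)
    fix i assume "i \<in> {i \<in> bitstrs m. take k i = c}"
    then have "i = c @ drop k i" "length (drop k i) = m - k"
      using assms by (auto, metis append_take_drop_id)
    then show "i \<in> (\<lambda>r. c @ r) ` bitstrs (m - k)" by auto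
  qed (use assms in auto)
  then show ?thesis by (simp add: card_image card_bitstrs inj_on_def)
qed

lemma card_xor_mixer_preimage:
  assumes x: "x \<in> top_half n" and y: "y \<in> top_half n" and mn: "n - 1 \<le> m"
  shows "card {i \<in> bitstrs m. xor_mixer i x = y} = 2 ^ (m - (n - 1))"
proof -
  obtain t t' where xy: "x = True # t" "y = True # t'" and len: "length t = n - 1" "length t' = n - 1"
    using x y by (cases x; cases y) (auto simp: top_half_def)
  have "{i \<in> bitstrs m. xor_mixer i x = y} = {i \<in> bitstrs m. take (n - 1) i = xor_bits t t'}"
    using xor_bits_eq_iff[OF len] mn by (auto simp: xy xor_mixer_def)
  then show ?thesis
    using card_prefix_class[of "xor_bits t t'" "n - 1" m] len mn by (simp add: xor_bits_def)
qed

lemma mixer_tv_top_half: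
  assumes x: "x \<in> top_half n" and n: "n \<ge> 1" and mn: "n \<le> m"
  shows "mixer_tv (bitstrs m) xor_mixer (top_half n) x = 0"
proof -
  have "real (card {i \<in> bitstrs m. xor_mixer i x = y}) / real (card (bitstrs m))
        = 1 / real (card (top_half n))" if y: "y \<in> top_half n" for y
  proof -
    have "real (card {i \<in> bitstrs m. xor_mixer i x = y}) = 2 ^ (m - (n - 1))"
      using card_xor_mixer_preimage[OF x y] mn by simp
    also have "\<dots> = 2 ^ m / 2 ^ (n - 1)" using mn by (simp add: power_diff)
    finally show ?thesis using n by (simp add: card_bitstrs card_top_half)
  qed
  then show ?thesis unfolding mixer_tv_def by simp
qed

lemma mixer_tv_fixed_point:
  assumes "\<And>i. xor_mixer i z = z"
  shows "mixer_tv (bitstrs m) xor_mixer {z} z = 0"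
proof -
  have "{i \<in> bitstrs m. xor_mixer i z = z} = bitstrs m" using assms by auto
  then show ?thesis unfolding mixer_tv_def by (simp add: card_bitstrs)
qed

lemma instance_component_mixer:
  assumes S: "top_half n \<subseteq> S" "S \<subseteq> top_half n \<union> candidates n" and n: "n \<ge> 1" and mn: "n \<le> m"
  shows "component_mixer n m S (insert (top_half n) ((\<lambda>z. {z}) ` (S - top_half n))) (bitstrs m) xor_mixer"
proof -
  let ?P = "insert (top_half n) ((\<lambda>z. {z}) ` (S - top_half n))"
  have fixed: "xor_mixer i z = z" if "z \<in> S - top_half n" for i z
    using that S by (auto simp: candidates_def xor_mixer_def)
  have "\<Union> ?P = S" using S by blast
  moreover have "disjoint ?P" by (auto simp: disjoint_def)
  ultimately have part: "partition_on S ?P"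
    using top_half_nonempty[OF n] by (auto simp: partition_on_def)
  have sub: "S \<subseteq> bitstrs n"
    using S(2) instance_strings by (rule order_trans)
  have mixes: "inj_on (xor_mixer i) S \<and> (\<forall>C\<in>?P. \<forall>x\<in>C. xor_mixer i x \<in> C)"
    if "i \<in> bitstrs m" for i
  proof -
    have "xor_mixer i (xor_mixer i x) = x" if "x \<in> S" for x
      using xor_mixer_involution[OF S _ that] \<open>i \<in> bitstrs m\<close> mn by simp
    then have "inj_on (xor_mixer i) S" by (metis inj_onI)
    moreover have "xor_mixer i x \<in> top_half n" if "x \<in> top_half n" for x
      using xor_mixer_involution[of n "top_half n" i x] that \<open>i \<in> bitstrs m\<close> mn by simp
    ultimately show ?thesis using fixed by auto
  qed
  have tv: "mixer_tv (bitstrs m) xor_mixer C x \<le> 2 powr (- real n - 2)" if "C \<in> ?P" "x \<in> C" for C x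
    using that mixer_tv_top_half[OF _ n mn] mixer_tv_fixed_point fixed by auto
  have "S \<noteq> {}" using S top_half_nonempty[OF n] by blast
  have "bitstrs m \<noteq> {}" using mem_bitstrs[of "replicate m False" m] by (metis empty_iff length_replicate)
  with part sub mixes tv \<open>S \<noteq> {}\<close> show ?thesis
    unfolding component_mixer_def by (intro conjI ballI) auto
qed

section \<open>The oracle on basis states, sliced by the string register\<close>

lemma sum_supported_on_image:
  assumes "finite B" "inj_on g C" "g ` C \<subseteq> B" "\<And>k. k \<in> B \<Longrightarrow> k \<notin> g ` C \<Longrightarrow> F k = 0"
  shows "sum F B = (\<Sum>c\<in>C. F (g c))"
proof -
  have "sum F B = sum F (g ` C)"
    using assms by (intro sum.mono_neutral_right) auto
  also have "\<dots> = (\<Sum>c\<in>C. F (g c))" using assms(2) by (simp add: sum.reindex)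
  finally show ?thesis .
qed

lemma sum_times_bool: "(\<Sum>t\<in>X \<times> (UNIV :: bool set). f t) = (\<Sum>s\<in>X. f (s, True) + f (s, False))"
proof -
  have "(\<Sum>t\<in>X \<times> (UNIV :: bool set). f t) = (\<Sum>s\<in>X. \<Sum>b\<in>UNIV. f (s, b))"
    by (simp add: sum.cartesian_product)
  then show ?thesis by (simp add: UNIV_bool add.commute)
qed

text \<open>A basis state of the full register is a slice index (all registers except the string
  register) together with a string.\<close>
type_synonym slice = "nat \<times> nat \<times> bitstr \<times> bool \<times> nat"

definition slices :: "nat \<Rightarrow> nat \<Rightarrow> slice set" where
  "slices m w = {..<8} \<times> {..<3} \<times> bitstrs m \<times> UNIV \<times> {..<w}"

definition at_string :: "slice \<Rightarrow> bitstr \<Rightarrow> qreg \<times> nat" where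
  "at_string r s = (case r of (c, a, i, b, j) \<Rightarrow> ((c, a, i, s, b), j))"

lemma at_string_simp [simp]: "at_string (c, a, i, b, j) s = ((c, a, i, s, b), j)"
  by (simp add: at_string_def)

lemma finite_slices [simp]: "finite (slices m w)"
  by (simp add: slices_def)

lemma sum_full_basis_slices:
  "(\<Sum>x\<in>full_basis n m w. F x) = (\<Sum>r\<in>slices m w. \<Sum>s\<in>bitstrs n. F (at_string r s))"
proof -
  have "bij_betw (\<lambda>(r, s). at_string r s) (slices m w \<times> bitstrs n) (full_basis n m w)"
    by (rule bij_betwI[where g = "\<lambda>((c, a, i, s, b), j). ((c, a, i, b, j), s)"])
       (auto simp: slices_def at_string_def full_basis_def qbasis_def)
  then show ?thesis
    by (simp add: sum.reindex_bij_betw[symmetric] sum.cartesian_product split_def)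
qed

lemma vnorm_sq_slices:
  "(vnorm (full_basis n m w) \<phi>)\<^sup>2 = (\<Sum>r\<in>slices m w. \<Sum>s\<in>bitstrs n. (cmod (\<phi> (at_string r s)))\<^sup>2)"
  by (simp add: vnorm_sq sum_full_basis_slices)

definition flip_answer :: "slice \<Rightarrow> slice" where
  "flip_answer r = (case r of (c, a, i, b, j) \<Rightarrow> (c, a, i, \<not> b, j))"

lemma flip_answer_simp [simp]: "flip_answer (c, a, i, b, j) = (c, a, i, \<not> b, j)"
  by (simp add: flip_answer_def)

lemma flip_answer_bij: "bij_betw flip_answer (slices m w) (slices m w)"
  by (rule bij_betwI[where g = flip_answer]) (auto simp: slices_def flip_answer_def split: prod.splits)

context
  fixes n m w :: nat and S Ind :: "bitstr set" and M :: "bitstr \<Rightarrow> bitstr \<Rightarrow> bitstr"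
begin

lemma apply_oracle_op1:
  assumes "((1, a, i, s', b), j) \<in> full_basis n m w"
  shows "apply_op (full_basis n m w) (full_oracle n m S Ind M) \<phi> ((1, a, i, s', b), j)
       = \<phi> ((1, a, i, s', b \<noteq> (s' \<in> S)), j)"
proof -
  have "full_oracle n m S Ind M ((1, a, i, s', b), j) y
        = (if y = ((1, a, i, s', b \<noteq> (s' \<in> S)), j) then 1 else 0)" for y
  proof -
    obtain c a2 i2 s b2 j2 where y: "y = ((c, a2, i2, s, b2), j2)" by (cases y) auto
    show ?thesis unfolding y
      by (cases b; cases b2; cases "s' \<in> S"; cases "c = 1"; cases "s = s'")
         (simp_all add: full_oracle_def oracle_kernel_def delta_def)
  qed
  then show ?thesis
    unfolding apply_op_def using assms by (simp add: if_distrib[of "\<lambda>v. v * _"] cong: if_cong)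
qed

lemma apply_oracle_op3:
  assumes "((3, a, i, s', b), j) \<in> full_basis n m w"
  shows "apply_op (full_basis n m w) (full_oracle n m S Ind M) \<phi> ((3, a, i, s', b), j) =
     (\<Sum>s\<in>bitstrs n. prep_kernel (bitstrs n) (replicate n False) S s' s * \<phi> ((3, a, i, s, b), j))"
proof -
  have "apply_op (full_basis n m w) (full_oracle n m S Ind M) \<phi> ((3, a, i, s', b), j) =
     (\<Sum>s\<in>bitstrs n. full_oracle n m S Ind M ((3, a, i, s', b), j) ((3, a, i, s, b), j) * \<phi> ((3, a, i, s, b), j))"
    unfolding apply_op_def
  proof (rule sum_supported_on_image[where g = "\<lambda>s. ((3, a, i, s, b), j)"])
    fix k assume "k \<in> full_basis n m w" "k \<notin> (\<lambda>s. ((3, a, i, s, b), j)) ` bitstrs n"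
    then show "full_oracle n m S Ind M ((3, a, i, s', b), j) k * \<phi> k = 0"
      by (cases k) (auto simp: full_oracle_def oracle_kernel_def delta_def image_iff)
  qed (use assms in \<open>auto simp: inj_on_def\<close>)
  then show ?thesis by (simp add: full_oracle_def oracle_kernel_def delta_def)
qed

lemma apply_oracle_op5:
  assumes "((5, a, i, s', b), j) \<in> full_basis n m w"
  shows "apply_op (full_basis n m w) (full_oracle n m S Ind M) \<phi> ((5, a, i, s', b), j) =
     (\<Sum>s\<in>bitstrs n. proj_kernel S s' s * \<phi> ((5, a, i, s, \<not> b), j)
        + (delta s' s - proj_kernel S s' s) * \<phi> ((5, a, i, s, b), j))"
proof -
  let ?g = "\<lambda>t. ((5, a, i, fst t, snd t), j)"
  have "apply_op (full_basis n m w) (full_oracle n m S Ind M) \<phi> ((5, a, i, s', b), j) =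
     (\<Sum>t\<in>bitstrs n \<times> UNIV. full_oracle n m S Ind M ((5, a, i, s', b), j) (?g t) * \<phi> (?g t))"
    unfolding apply_op_def
  proof (rule sum_supported_on_image[where g = ?g])
    fix k assume "k \<in> full_basis n m w" "k \<notin> ?g ` (bitstrs n \<times> UNIV)"
    then show "full_oracle n m S Ind M ((5, a, i, s', b), j) k * \<phi> k = 0"
      by (cases k) (auto simp: full_oracle_def oracle_kernel_def delta_def image_iff)
  qed (use assms in \<open>auto simp: inj_on_def\<close>)
  also have "\<dots> = (\<Sum>s\<in>bitstrs n. proj_kernel S s' s * \<phi> ((5, a, i, s, \<not> b), j)
        + (delta s' s - proj_kernel S s' s) * \<phi> ((5, a, i, s, b), j))"
    unfolding sum_times_bool
    by (cases b) (simp_all add: full_oracle_def oracle_kernel_def delta_def algebra_simps)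
  finally show ?thesis .
qed

end

section \<open>Where the oracles of the two instances differ\<close>

text \<open>From now on \<open>z\<close> is a candidate and the two-component instance is \<open>insert z (top_half n)\<close>.
  Both instances share the mixer, so their oracles agree except on operations 1, 3 and 5.\<close>
lemma instance_oracles_agree:
  assumes mn: "n \<le> m" and z: "z \<in> candidates n" and c: "c \<noteq> 1" "c \<noteq> 3" "c \<noteq> 5"
  shows "full_oracle n m (insert z (top_half n)) (bitstrs m) xor_mixer ((c, a, i, s', b), j) y
       = full_oracle n m (top_half n) (bitstrs m) xor_mixer ((c, a, i, s', b), j) y"
proof -
  have "mix_pow (insert z (top_half n)) (bitstrs m) xor_mixer = mix_pow (top_half n) (bitstrs m) xor_mixer"
  proof -
    have "insert z (top_half n) \<subseteq> top_half n \<union> candidates n" using z by blast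
    then show ?thesis
      using mix_pow_instance[OF subset_insertI _ mn] mix_pow_instance[OF order_refl _ mn]
      by (simp add: fun_eq_iff)
  qed
  moreover obtain c2 a2 i2 s2 b2 j2 where "y = ((c2, a2, i2, s2, b2), j2)" by (cases y) auto
  ultimately show ?thesis
    using c by (simp add: full_oracle_def oracle_kernel_def)
qed

text \<open>The Householder direction of the preparation oracle: reference state minus the
  uniform superposition; it has squared norm 2 when the reference string is not in \<open>S\<close>.\<close>
definition prep_dir :: "nat \<Rightarrow> bitstr set \<Rightarrow> bitstr \<Rightarrow> real" where
  "prep_dir n S u = (if u = replicate n False then 1 else 0) - unif_amp S u"

lemma prep_dir_sq_sum:
  assumes "S \<subseteq> bitstrs n" "S \<noteq> {}" "replicate n False \<notin> S"
  shows "(\<Sum>u\<in>bitstrs n. (prep_dir n S u)\<^sup>2) = 2"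
proof -
  have "(prep_dir n S u)\<^sup>2 = (if u = replicate n False then 1 else 0) + (unif_amp S u)\<^sup>2" for u
    using assms(3) by (auto simp: prep_dir_def unif_amp_def power2_eq_square)
  then show ?thesis using unif_amp_sq_sum[OF finite_bitstrs assms(1,2)] by (simp add: sum.distrib)
qed

lemma prep_kernel_eq:
  assumes "S \<subseteq> bitstrs n" "S \<noteq> {}" "replicate n False \<notin> S"
  shows "prep_kernel (bitstrs n) (replicate n False) S s' s
       = delta s' s - complex_of_real (prep_dir n S s' * prep_dir n S s)"
  using prep_dir_sq_sum[OF assms] unfolding prep_kernel_def Let_def prep_dir_def[symmetric] by simp

text \<open>The three parts of the difference of the two oracles: the membership test at \<open>z\<close>,
  and the changes of the preparation and of the reflection oracle.\<close>
definition membership_part :: "bitstr \<Rightarrow> (qreg \<times> nat \<Rightarrow> complex) \<Rightarrow> qreg \<times> nat \<Rightarrow> complex" where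
  "membership_part z \<phi> x = (case x of ((c, a, i, s', b), j) \<Rightarrow>
     if c = 1 \<and> s' = z then \<phi> ((1, a, i, z, \<not> b), j) - \<phi> x else 0)"

definition prep_part :: "nat \<Rightarrow> bitstr \<Rightarrow> (qreg \<times> nat \<Rightarrow> complex) \<Rightarrow> qreg \<times> nat \<Rightarrow> complex" where
  "prep_part n z \<phi> x = (case x of ((c, a, i, s', b), j) \<Rightarrow>
     if c = 3 then (\<Sum>s\<in>bitstrs n. complex_of_real (prep_dir n (top_half n) s' * prep_dir n (top_half n) s
        - prep_dir n (insert z (top_half n)) s' * prep_dir n (insert z (top_half n)) s) * \<phi> ((3, a, i, s, b), j))
     else 0)"

definition reflect_part :: "nat \<Rightarrow> bitstr \<Rightarrow> (qreg \<times> nat \<Rightarrow> complex) \<Rightarrow> qreg \<times> nat \<Rightarrow> complex" where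
  "reflect_part n z \<phi> x = (case x of ((c, a, i, s', b), j) \<Rightarrow>
     if c = 5 then (\<Sum>s\<in>bitstrs n. complex_of_real (unif_amp (insert z (top_half n)) s' * unif_amp (insert z (top_half n)) s
        - unif_amp (top_half n) s' * unif_amp (top_half n) s) * (\<phi> ((5, a, i, s, \<not> b), j) - \<phi> ((5, a, i, s, b), j)))
     else 0)"

lemma oracle_difference_parts:
  assumes n: "n \<ge> 1" and mn: "n \<le> m" and z: "z \<in> candidates n" and x: "x \<in> full_basis n m w"
  shows "apply_op (full_basis n m w) (full_oracle n m (insert z (top_half n)) (bitstrs m) xor_mixer) \<phi> x
       - apply_op (full_basis n m w) (full_oracle n m (top_half n) (bitstrs m) xor_mixer) \<phi> x
       = membership_part z \<phi> x + prep_part n z \<phi> x + reflect_part n z \<phi> x"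
proof -
  obtain c a i s' b j where xe: "x = ((c, a, i, s', b), j)" by (cases x) auto
  let ?Sz = "insert z (top_half n)" and ?B = "full_basis n m w"
  have Sz: "?Sz \<subseteq> bitstrs n" "replicate n False \<notin> ?Sz"
    using top_half_subset[of n] candidate_length[OF z] zero_not_top[of n] zero_not_candidate[of n] z
    by auto
  consider "c = 1" | "c = 3" | "c = 5" | "c \<noteq> 1" "c \<noteq> 3" "c \<noteq> 5" by blast
  then show ?thesis
  proof cases
    case 1
    have "apply_op ?B (full_oracle n m S (bitstrs m) xor_mixer) \<phi> x = \<phi> ((1, a, i, s', b \<noteq> (s' \<in> S)), j)" for S
      unfolding xe 1 by (rule apply_oracle_op1) (use x xe 1 in simp)
    then show ?thesis using candidate_not_top[OF z]
      by (cases "s' = z") (auto simp: xe 1 membership_part_def prep_part_def reflect_part_def)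
  next
    case 2
    have "apply_op ?B (full_oracle n m S (bitstrs m) xor_mixer) \<phi> x =
       (\<Sum>s\<in>bitstrs n. prep_kernel (bitstrs n) (replicate n False) S s' s * \<phi> ((3, a, i, s, b), j))" for S
      unfolding xe 2 by (rule apply_oracle_op3) (use x xe 2 in simp)
    then show ?thesis
      by (simp add: xe 2 prep_kernel_eq[OF Sz(1) _ Sz(2)]
          prep_kernel_eq[OF top_half_subset top_half_nonempty[OF n] zero_not_top]
          membership_part_def prep_part_def reflect_part_def sum_subtractf[symmetric] algebra_simps)
  next
    case 3
    have "apply_op ?B (full_oracle n m S (bitstrs m) xor_mixer) \<phi> x =
       (\<Sum>s\<in>bitstrs n. proj_kernel S s' s * \<phi> ((5, a, i, s, \<not> b), j)
        + (delta s' s - proj_kernel S s' s) * \<phi> ((5, a, i, s, b), j))" for S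
      unfolding xe 3 by (rule apply_oracle_op5) (use x xe 3 in simp)
    then show ?thesis
      by (simp add: xe 3 proj_kernel_def membership_part_def prep_part_def
          reflect_part_def sum_subtractf[symmetric] algebra_simps)
  next
    case 4
    then show ?thesis
      using instance_oracles_agree[OF mn z 4]
      by (simp add: xe apply_op_def membership_part_def prep_part_def reflect_part_def)
  qed
qed

section \<open>Norm bounds for the three parts\<close>

lemma cmod_diff_sq_le: "(cmod (a - b))\<^sup>2 \<le> 2 * (cmod a)\<^sup>2 + 2 * (cmod b)\<^sup>2"
proof -
  have "(cmod (a - b))\<^sup>2 \<le> (cmod a + cmod b)\<^sup>2"
    by (intro power_mono norm_triangle_ineq4) auto
  also have "\<dots> \<le> 2 * (cmod a)\<^sup>2 + 2 * (cmod b)\<^sup>2"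
    using zero_le_power2[of "cmod a - cmod b"] by (simp add: power2_eq_square algebra_simps)
  finally show ?thesis .
qed

text \<open>The operator \<open>v v\<^sup>T - w w\<^sup>T = (v - w) v\<^sup>T + w (v - w)\<^sup>T\<close> has norm at most
  \<open>|v - w| (|v| + |w|)\<close>.\<close>
lemma rank_two_bound:
  fixes v w :: "'a \<Rightarrow> real"
  shows "vnorm X (\<lambda>s'. \<Sum>s\<in>X. complex_of_real (v s' * v s - w s' * w s) * \<psi> s)
     \<le> L2_set (\<lambda>s. v s - w s) X * (L2_set v X + L2_set w X) * vnorm X \<psi>"
proof -
  define \<alpha> where "\<alpha> = (\<Sum>s\<in>X. complex_of_real (v s) * \<psi> s)"
  define \<beta> where "\<beta> = (\<Sum>s\<in>X. complex_of_real (v s - w s) * \<psi> s)"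
  have "(\<Sum>s\<in>X. complex_of_real (v s' * v s - w s' * w s) * \<psi> s)
      = complex_of_real (v s' - w s') * \<alpha> + complex_of_real (w s') * \<beta>" for s'
    unfolding \<alpha>_def \<beta>_def
    by (simp add: sum_distrib_left sum.distrib[symmetric] sum_subtractf[symmetric] algebra_simps)
  then have "vnorm X (\<lambda>s'. \<Sum>s\<in>X. complex_of_real (v s' * v s - w s' * w s) * \<psi> s)
      \<le> L2_set (\<lambda>s. v s - w s) X * cmod \<alpha> + L2_set w X * cmod \<beta>"
    using vnorm_triangle[of X "\<lambda>s'. complex_of_real (v s' - w s') * \<alpha>" "\<lambda>s'. complex_of_real (w s') * \<beta>"]
    by (simp only: vnorm_real_scale)
  also have "\<dots> \<le> L2_set (\<lambda>s. v s - w s) X * (L2_set v X * vnorm X \<psi>)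
                 + L2_set w X * (L2_set (\<lambda>s. v s - w s) X * vnorm X \<psi>)"
    unfolding \<alpha>_def \<beta>_def by (intro add_mono mult_left_mono cmod_real_inner_le L2_set_nonneg)
  finally show ?thesis by (simp add: algebra_simps)
qed

lemma slicewise_bound:
  fixes D \<phi> :: "qreg \<times> nat \<Rightarrow> complex"
  assumes L: "L \<ge> 0" and \<sigma>: "bij_betw \<sigma> (slices m w) (slices m w)"
    and slice: "\<And>r. r \<in> slices m w \<Longrightarrow> (\<Sum>s\<in>bitstrs n. (cmod (D (at_string r s)))\<^sup>2)
        \<le> L\<^sup>2 * ((\<Sum>s\<in>bitstrs n. (cmod (\<phi> (at_string r s)))\<^sup>2) + (\<Sum>s\<in>bitstrs n. (cmod (\<phi> (at_string (\<sigma> r) s)))\<^sup>2))"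
  shows "vnorm (full_basis n m w) D \<le> sqrt 2 * L * vnorm (full_basis n m w) \<phi>"
proof -
  let ?f = "\<lambda>r. (\<Sum>s\<in>bitstrs n. (cmod (\<phi> (at_string r s)))\<^sup>2)"
  have total: "(\<Sum>r\<in>slices m w. ?f r) = (vnorm (full_basis n m w) \<phi>)\<^sup>2"
    by (rule vnorm_sq_slices[symmetric])
  have "(vnorm (full_basis n m w) D)\<^sup>2 \<le> (\<Sum>r\<in>slices m w. L\<^sup>2 * (?f r + ?f (\<sigma> r)))"
    unfolding vnorm_sq_slices by (rule sum_mono) (rule slice)
  also have "\<dots> = L\<^sup>2 * ((\<Sum>r\<in>slices m w. ?f r) + (\<Sum>r\<in>slices m w. ?f (\<sigma> r)))"
    by (simp only: sum.distrib[symmetric] sum_distrib_left)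
  also have "(\<Sum>r\<in>slices m w. ?f (\<sigma> r)) = (\<Sum>r\<in>slices m w. ?f r)"
    using sum.reindex_bij_betw[OF \<sigma>, of ?f] by simp
  also have "L\<^sup>2 * ((\<Sum>r\<in>slices m w. ?f r) + (\<Sum>r\<in>slices m w. ?f r))
      = (sqrt 2 * L * vnorm (full_basis n m w) \<phi>)\<^sup>2"
    unfolding total by (simp add: power_mult_distrib)
  finally show ?thesis
    by (rule power2_le_imp_le) (use L in simp)
qed

text \<open>The membership part lives on the single string \<open>z\<close>.\<close>
lemma membership_part_bound:
  assumes "length z = n"
  shows "(vnorm (full_basis n m w) (membership_part z \<phi>))\<^sup>2
           \<le> 4 * (\<Sum>r\<in>slices m w. (cmod (\<phi> (at_string r z)))\<^sup>2)"
proof -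
  let ?g = "\<lambda>r. (cmod (\<phi> (at_string r z)))\<^sup>2"
  have "(\<Sum>s\<in>bitstrs n. (cmod (membership_part z \<phi> (at_string r s)))\<^sup>2)
        \<le> 2 * ?g (flip_answer r) + 2 * ?g r" for r
  proof -
    obtain c a i b j where r: "r = (c, a, i, b, j)" by (cases r) auto
    have "(\<Sum>s\<in>bitstrs n. (cmod (membership_part z \<phi> (at_string r s)))\<^sup>2)
        = (\<Sum>s\<in>{z}. (cmod (membership_part z \<phi> (at_string r s)))\<^sup>2)"
      using assms by (intro sum.mono_neutral_right) (auto simp: r membership_part_def)
    also have "\<dots> \<le> 2 * ?g (flip_answer r) + 2 * ?g r"
      using cmod_diff_sq_le[of "\<phi> (at_string (flip_answer r) z)" "\<phi> (at_string r z)"]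
      by (auto simp: r membership_part_def)
    finally show ?thesis .
  qed
  then have "(vnorm (full_basis n m w) (membership_part z \<phi>))\<^sup>2
      \<le> 2 * (\<Sum>r\<in>slices m w. ?g (flip_answer r)) + 2 * (\<Sum>r\<in>slices m w. ?g r)"
    unfolding vnorm_sq_slices by (simp add: sum.distrib[symmetric] sum_distrib_left sum_mono)
  also have "(\<Sum>r\<in>slices m w. ?g (flip_answer r)) = (\<Sum>r\<in>slices m w. ?g r)"
    using sum.reindex_bij_betw[OF flip_answer_bij, of ?g] by simp
  finally show ?thesis by simp
qed

definition unif_shift :: "nat \<Rightarrow> bitstr \<Rightarrow> real" where
  "unif_shift n z = L2_set (\<lambda>s. unif_amp (insert z (top_half n)) s - unif_amp (top_half n) s) (bitstrs n)"

lemma instance_set_facts: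
  assumes "z \<in> candidates n"
  shows "insert z (top_half n) \<subseteq> bitstrs n" "replicate n False \<notin> insert z (top_half n)"
  using assms top_half_subset[of n] candidate_length[OF assms] zero_not_top[of n] zero_not_candidate[of n]
  by auto

lemma L2_unif_amp: "finite X \<Longrightarrow> A \<subseteq> X \<Longrightarrow> A \<noteq> {} \<Longrightarrow> L2_set (unif_amp A) X = 1"
  unfolding L2_set_def using unif_amp_sq_sum by simp

lemma L2_prep_dir:
  "S \<subseteq> bitstrs n \<Longrightarrow> S \<noteq> {} \<Longrightarrow> replicate n False \<notin> S \<Longrightarrow> L2_set (prep_dir n S) (bitstrs n) = sqrt 2"
  unfolding L2_set_def using prep_dir_sq_sum by simp

text \<open>Both rank-two parts have norm at most \<open>4 \<delta> |\<phi>|\<close>, where \<open>\<delta>\<close> is the shift of the uniform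
  superposition: on each slice they apply \<open>v v\<^sup>T - u u\<^sup>T\<close> with \<open>|v - u| = \<delta>\<close>.\<close>
lemma prep_part_bound:
  assumes n: "n \<ge> 1" and z: "z \<in> candidates n"
  shows "vnorm (full_basis n m w) (prep_part n z \<phi>) \<le> 4 * unif_shift n z * vnorm (full_basis n m w) \<phi>"
proof -
  let ?v = "prep_dir n (top_half n)" and ?u = "prep_dir n (insert z (top_half n))" and ?X = "bitstrs n"
  define L where "L = L2_set (\<lambda>s. ?v s - ?u s) ?X * (L2_set ?v ?X + L2_set ?u ?X)"
  have L: "sqrt 2 * L = 4 * unif_shift n z"
  proof -
    have "L2_set (\<lambda>s. ?v s - ?u s) ?X = unif_shift n z"
      unfolding unif_shift_def by (rule L2_set_cong) (auto simp: prep_dir_def)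
    then show ?thesis
      using L2_prep_dir[OF top_half_subset top_half_nonempty[OF n] zero_not_top]
        L2_prep_dir[OF instance_set_facts(1)[OF z] insert_not_empty instance_set_facts(2)[OF z]]
      by (simp add: L_def)
  qed
  have "vnorm (full_basis n m w) (prep_part n z \<phi>) \<le> sqrt 2 * L * vnorm (full_basis n m w) \<phi>"
  proof (rule slicewise_bound[OF _ flip_answer_bij])
    show "0 \<le> L" by (simp add: L_def)
    fix r :: slice
    obtain c a i b j where r: "r = (c, a, i, b, j)" by (cases r) auto
    let ?A = "\<lambda>r. \<Sum>s\<in>?X. (cmod (\<phi> (at_string r s)))\<^sup>2"
    show "(\<Sum>s\<in>?X. (cmod (prep_part n z \<phi> (at_string r s)))\<^sup>2) \<le> L\<^sup>2 * (?A r + ?A (flip_answer r))"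
    proof (cases "c = 3")
      case True
      have "(\<Sum>s'\<in>?X. (cmod (prep_part n z \<phi> (at_string r s')))\<^sup>2)
          = (vnorm ?X (\<lambda>s'. \<Sum>s\<in>?X. complex_of_real (?v s' * ?v s - ?u s' * ?u s) * \<phi> (at_string r s)))\<^sup>2"
        by (simp add: vnorm_sq r True prep_part_def)
      also have "\<dots> \<le> (L * vnorm ?X (\<lambda>s. \<phi> (at_string r s)))\<^sup>2"
        unfolding L_def by (intro power_mono rank_two_bound) simp
      also have "\<dots> = L\<^sup>2 * ?A r"
        by (simp add: power_mult_distrib vnorm_sq)
      also have "\<dots> \<le> L\<^sup>2 * (?A r + ?A (flip_answer r))"
        by (intro mult_left_mono) (simp_all add: sum_nonneg)
      finally show ?thesis .
    qed (simp add: r prep_part_def sum_nonneg)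
  qed
  then show ?thesis using L by simp
qed

lemma reflect_part_bound:
  assumes n: "n \<ge> 1" and z: "z \<in> candidates n"
  shows "vnorm (full_basis n m w) (reflect_part n z \<phi>) \<le> 4 * unif_shift n z * vnorm (full_basis n m w) \<phi>"
proof -
  let ?v = "unif_amp (insert z (top_half n))" and ?u = "unif_amp (top_half n)" and ?X = "bitstrs n"
  define L where "L = L2_set (\<lambda>s. ?v s - ?u s) ?X * (L2_set ?v ?X + L2_set ?u ?X)"
  have L: "sqrt 2 * (sqrt 2 * L) = 4 * unif_shift n z"
    using L2_unif_amp[OF finite_bitstrs instance_set_facts(1)[OF z] insert_not_empty]
      L2_unif_amp[OF finite_bitstrs top_half_subset top_half_nonempty[OF n]]
    by (simp add: L_def unif_shift_def)
  have "vnorm (full_basis n m w) (reflect_part n z \<phi>) \<le> sqrt 2 * (sqrt 2 * L) * vnorm (full_basis n m w) \<phi>"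
  proof (rule slicewise_bound[OF _ flip_answer_bij])
    show "0 \<le> sqrt 2 * L" by (simp add: L_def)
    fix r :: slice
    obtain c a i b j where r: "r = (c, a, i, b, j)" by (cases r) auto
    let ?A = "\<lambda>r. \<Sum>s\<in>?X. (cmod (\<phi> (at_string r s)))\<^sup>2"
    show "(\<Sum>s\<in>?X. (cmod (reflect_part n z \<phi> (at_string r s)))\<^sup>2) \<le> (sqrt 2 * L)\<^sup>2 * (?A r + ?A (flip_answer r))"
    proof (cases "c = 5")
      case True
      let ?\<psi> = "\<lambda>s. \<phi> (at_string (flip_answer r) s) - \<phi> (at_string r s)"
      have "(\<Sum>s'\<in>?X. (cmod (reflect_part n z \<phi> (at_string r s')))\<^sup>2)
          = (vnorm ?X (\<lambda>s'. \<Sum>s\<in>?X. complex_of_real (?v s' * ?v s - ?u s' * ?u s) * ?\<psi> s))\<^sup>2"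
        by (simp add: vnorm_sq r True reflect_part_def)
      also have "\<dots> \<le> (L * vnorm ?X ?\<psi>)\<^sup>2"
        unfolding L_def by (intro power_mono rank_two_bound) simp
      also have "\<dots> = L\<^sup>2 * (\<Sum>s\<in>?X. (cmod (?\<psi> s))\<^sup>2)"
        by (simp add: power_mult_distrib vnorm_sq)
      also have "\<dots> \<le> L\<^sup>2 * (\<Sum>s\<in>?X. 2 * (cmod (\<phi> (at_string (flip_answer r) s)))\<^sup>2 + 2 * (cmod (\<phi> (at_string r s)))\<^sup>2)"
        by (intro mult_left_mono sum_mono cmod_diff_sq_le) auto
      also have "\<dots> = (sqrt 2 * L)\<^sup>2 * (?A r + ?A (flip_answer r))"
        by (simp add: sum.distrib sum_distrib_left[symmetric] power_mult_distrib algebra_simps)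
      finally show ?thesis .
    qed (simp add: r reflect_part_def sum_nonneg)
  qed
  then show ?thesis using L by simp
qed

lemma sq_diff_le_diff_sq:
  fixes a b :: real
  assumes "0 \<le> b" "b \<le> a"
  shows "(b - a)\<^sup>2 \<le> a\<^sup>2 - b\<^sup>2"
  using assms mult_right_mono[of b a b] by (simp add: power2_eq_square algebra_simps)

text \<open>Adding one point to a set of size \<open>N\<close> moves the uniform superposition by at most
  \<open>\<surd>(2/N)\<close>: the squared change is at most \<open>N (1/N - 1/(N+1)) + 1/(N+1) = 2/(N+1)\<close>.\<close>
lemma unif_amp_insert_shift:
  assumes fin: "finite X" and A: "A \<subseteq> X" "A \<noteq> {}" and z: "z \<in> X" "z \<notin> A"
  shows "(\<Sum>s\<in>X. (unif_amp (insert z A) s - unif_amp A s)\<^sup>2) \<le> 2 / real (card A)"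
proof -
  define N where "N = real (card A)"
  have N: "N > 0" using A fin finite_subset N_def card_gt_0_iff by fastforce
  have finA: "finite A" using A fin finite_subset by blast
  have card_z: "real (card (insert z A)) = N + 1"
    using z finA by (simp add: N_def)
  define g where "g s = (if s \<in> A then 1 / N - 1 / (N + 1) else if s = z then 1 / (N + 1) else 0)" for s
  have pointwise: "(unif_amp (insert z A) s - unif_amp A s)\<^sup>2 \<le> g s" for s
  proof (cases "s \<in> A")
    case True
    define a where "a = 1 / sqrt N"
    define b where "b = 1 / sqrt (N + 1)"
    have "0 \<le> b" "b \<le> a" using N by (auto simp: a_def b_def intro!: divide_left_mono)
    then have "(b - a)\<^sup>2 \<le> a\<^sup>2 - b\<^sup>2" by (rule sq_diff_le_diff_sq)
    moreover have "a\<^sup>2 = 1 / N" "b\<^sup>2 = 1 / (N + 1)"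
      using N by (simp_all add: a_def b_def power_divide)
    ultimately show ?thesis
      using True card_z by (simp add: unif_amp_def g_def a_def b_def N_def)
  next
    case False
    then show ?thesis using card_z by (auto simp: unif_amp_def g_def power_divide)
  qed
  have "(\<Sum>s\<in>X. (unif_amp (insert z A) s - unif_amp A s)\<^sup>2) \<le> (\<Sum>s\<in>X. g s)"
    by (rule sum_mono) (rule pointwise)
  also have "(\<Sum>s\<in>X. g s) = (\<Sum>s\<in>insert z A. g s)"
    using fin A z by (intro sum.mono_neutral_right) (auto simp: g_def)
  also have "\<dots> = N * (1 / N - 1 / (N + 1)) + 1 / (N + 1)"
    using z finA by (simp add: g_def N_def)
  also have "\<dots> = 2 / (N + 1)"
  proof -
    have "N * (1 / N - 1 / (N + 1)) = 1 - N / (N + 1)"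
      using N by (simp add: right_diff_distrib)
    also have "\<dots> = 1 / (N + 1)"
      using N by (simp add: field_simps)
    finally show ?thesis by (simp add: add_divide_distrib[symmetric])
  qed
  also have "\<dots> \<le> 2 / N"
    using N by (simp add: frac_le)
  finally show ?thesis by (simp add: N_def)
qed

text \<open>With \<open>N = 2\<^sup>n\<^sup>-\<^sup>1\<close> this gives \<open>\<delta> \<le> 2 / 2\<^sup>n\<^sup>/\<^sup>2\<close>.\<close>
lemma unif_shift_bound:
  assumes n: "n \<ge> 1" and z: "z \<in> candidates n"
  shows "unif_shift n z \<le> 2 / 2 powr (real n / 2)"
proof -
  have "(unif_shift n z)\<^sup>2 \<le> 2 / real (card (top_half n))"
    unfolding unif_shift_def L2_set_def
    using sum_nonneg[of "bitstrs n" "\<lambda>s. (unif_amp (insert z (top_half n)) s - unif_amp (top_half n) s)\<^sup>2"]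
      unif_amp_insert_shift[OF finite_bitstrs top_half_subset top_half_nonempty[OF n]
        _ candidate_not_top[OF z]] candidate_length[OF z] by simp
  also have "\<dots> = (2 / 2 powr (real n / 2))\<^sup>2"
  proof -
    have "(2 powr (real n / 2))\<^sup>2 = 2 powr (real n / 2 + real n / 2)"
      by (simp only: power2_eq_square powr_add)
    also have "\<dots> = 2 * 2 ^ (n - 1)"
      using n by (simp add: powr_realpow flip: power_Suc)
    finally have "(2 powr (real n / 2))\<^sup>2 = 2 * 2 ^ (n - 1)" .
    then show ?thesis using n by (simp add: card_top_half power_divide)
  qed
  finally show ?thesis
    by (rule power2_le_imp_le) simp
qed

lemma oracle_difference_bound:
  assumes n: "n \<ge> 1" and mn: "n \<le> m" and z: "z \<in> candidates n"
  shows "vnorm (full_basis n m w)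
           (\<lambda>x. apply_op (full_basis n m w) (full_oracle n m (insert z (top_half n)) (bitstrs m) xor_mixer) \<phi> x
              - apply_op (full_basis n m w) (full_oracle n m (top_half n) (bitstrs m) xor_mixer) \<phi> x)
         \<le> vnorm (full_basis n m w) (membership_part z \<phi>) + 16 / 2 powr (real n / 2) * vnorm (full_basis n m w) \<phi>"
proof -
  let ?B = "full_basis n m w"
  have "vnorm ?B (\<lambda>x. apply_op ?B (full_oracle n m (insert z (top_half n)) (bitstrs m) xor_mixer) \<phi> x
              - apply_op ?B (full_oracle n m (top_half n) (bitstrs m) xor_mixer) \<phi> x)
      = vnorm ?B (\<lambda>x. (membership_part z \<phi> x + prep_part n z \<phi> x) + reflect_part n z \<phi> x)"
    by (rule vnorm_cong) (simp add: oracle_difference_parts[OF n mn z])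
  also have "\<dots> \<le> vnorm ?B (membership_part z \<phi>) + vnorm ?B (prep_part n z \<phi>) + vnorm ?B (reflect_part n z \<phi>)"
    using vnorm_triangle[of ?B "\<lambda>x. membership_part z \<phi> x + prep_part n z \<phi> x" "reflect_part n z \<phi>"]
      vnorm_triangle[of ?B "membership_part z \<phi>" "prep_part n z \<phi>"] by linarith
  also have "\<dots> \<le> vnorm ?B (membership_part z \<phi>) + 8 * unif_shift n z * vnorm ?B \<phi>"
    using prep_part_bound[OF n z, of m w \<phi>] reflect_part_bound[OF n z, of m w \<phi>] by simp
  also have "\<dots> \<le> vnorm ?B (membership_part z \<phi>) + 16 / 2 powr (real n / 2) * vnorm ?B \<phi>"
    using mult_right_mono[OF unif_shift_bound[OF n z] vnorm_nonneg, of ?B \<phi>] by simp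
  finally show ?thesis .
qed

section \<open>The hybrid argument\<close>

lemma hybrid_bound:
  assumes U: "\<And>k. k \<le> T \<Longrightarrow> unitary_on (full_basis n m w) (U k)"
    and O1: "unitary_on (full_basis n m w) (full_oracle n m S1 I1 M1)"
    and t: "t \<le> T"
  shows "vnorm (full_basis n m w) (\<lambda>x. run_state n m w U S1 I1 M1 t x - run_state n m w U S0 I0 M0 t x)
     \<le> (\<Sum>k<t. vnorm (full_basis n m w)
           (\<lambda>x. apply_op (full_basis n m w) (full_oracle n m S1 I1 M1) (run_state n m w U S0 I0 M0 k) x
              - apply_op (full_basis n m w) (full_oracle n m S0 I0 M0) (run_state n m w U S0 I0 M0 k) x))"
  using t
proof (induction t)
  case 0
  then show ?case by (simp add: vnorm_def L2_set_def)
next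
  case (Suc t)
  let ?B = "full_basis n m w"
  let ?p1 = "run_state n m w U S1 I1 M1 t" and ?p0 = "run_state n m w U S0 I0 M0 t"
  let ?A1 = "apply_op ?B (full_oracle n m S1 I1 M1)" and ?A0 = "apply_op ?B (full_oracle n m S0 I0 M0)"
  have "vnorm ?B (\<lambda>x. run_state n m w U S1 I1 M1 (Suc t) x - run_state n m w U S0 I0 M0 (Suc t) x)
      = vnorm ?B (apply_op ?B (U (Suc t)) (\<lambda>y. ?A1 ?p1 y - ?A0 ?p0 y))"
    by (rule vnorm_cong) (simp add: apply_op_diff)
  also have "\<dots> = vnorm ?B (\<lambda>y. ?A1 (\<lambda>x. ?p1 x - ?p0 x) y + (?A1 ?p0 y - ?A0 ?p0 y))"
    by (simp add: unitary_preserves_vnorm[OF finite_full_basis U[OF Suc.prems]] apply_op_diff)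
  also have "\<dots> \<le> vnorm ?B (\<lambda>x. ?p1 x - ?p0 x) + vnorm ?B (\<lambda>y. ?A1 ?p0 y - ?A0 ?p0 y)"
    using vnorm_triangle[of ?B "?A1 (\<lambda>x. ?p1 x - ?p0 x)"]
    by (simp add: unitary_preserves_vnorm[OF finite_full_basis O1])
  finally show ?case using Suc by simp
qed

lemma init_state_vnorm: "0 < w \<Longrightarrow> vnorm (full_basis n m w) (init_state n m) = 1"
proof -
  let ?p = "((0::nat, 0::nat, replicate m False, replicate n False, False), 0::nat)"
  assume "0 < w"
  then have "(\<Sum>x\<in>full_basis n m w. (cmod (init_state n m x))\<^sup>2) = (\<Sum>x\<in>{?p}. (cmod (init_state n m x))\<^sup>2)"
    by (intro sum.mono_neutral_right) (auto simp: init_state_def)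
  then have "(vnorm (full_basis n m w) (init_state n m))\<^sup>2 = 1\<^sup>2"
    by (simp add: vnorm_sq init_state_def)
  then show ?thesis by (rule power2_eq_imp_eq) simp_all
qed

lemma run_state_vnorm:
  assumes w: "0 < w" and U: "\<And>k. k \<le> T \<Longrightarrow> unitary_on (full_basis n m w) (U k)"
    and O: "unitary_on (full_basis n m w) (full_oracle n m S I M)" and t: "t \<le> T"
  shows "vnorm (full_basis n m w) (run_state n m w U S I M t) = 1"
  using t
proof (induction t)
  case 0
  then show ?case using unitary_preserves_vnorm[OF finite_full_basis U[of 0]] init_state_vnorm[OF w] by simp
next
  case (Suc t)
  then show ?case
    using unitary_preserves_vnorm[OF finite_full_basis U[OF Suc.prems]]
      unitary_preserves_vnorm[OF finite_full_basis O] by simp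
qed

lemma acceptance_gap_distance:
  fixes a b :: "'x \<Rightarrow> complex"
  assumes fin: "finite B" and Acc: "Acc \<subseteq> B" and na: "vnorm B a = 1" and nb: "vnorm B b = 1"
    and gap: "(\<Sum>x\<in>Acc. (cmod (a x))\<^sup>2) - (\<Sum>x\<in>Acc. (cmod (b x))\<^sup>2) \<ge> 1/3"
  shows "vnorm B (\<lambda>x. a x - b x) \<ge> 1/6"
proof -
  have "1/3 \<le> (\<Sum>x\<in>Acc. (cmod (a x))\<^sup>2 - (cmod (b x))\<^sup>2)" using gap by (simp add: sum_subtractf)
  also have "\<dots> \<le> (\<Sum>x\<in>Acc. cmod (a x - b x) * (cmod (a x) + cmod (b x)))"
  proof (rule sum_mono)
    fix x
    have "(cmod (a x))\<^sup>2 - (cmod (b x))\<^sup>2 = (cmod (a x) - cmod (b x)) * (cmod (a x) + cmod (b x))"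
      by (simp add: power2_eq_square algebra_simps)
    also have "\<dots> \<le> cmod (a x - b x) * (cmod (a x) + cmod (b x))"
      by (intro mult_right_mono) (auto simp: norm_triangle_ineq2)
    finally show "(cmod (a x))\<^sup>2 - (cmod (b x))\<^sup>2 \<le> cmod (a x - b x) * (cmod (a x) + cmod (b x))" .
  qed
  also have "\<dots> \<le> (\<Sum>x\<in>B. cmod (a x - b x) * (cmod (a x) + cmod (b x)))"
    by (rule sum_mono2[OF fin Acc]) auto
  also have "\<dots> \<le> L2_set (\<lambda>x. cmod (a x - b x)) B * L2_set (\<lambda>x. cmod (a x) + cmod (b x)) B"
    using L2_set_mult_ineq[of "\<lambda>x. cmod (a x - b x)" "\<lambda>x. cmod (a x) + cmod (b x)" B] by simp
  also have "\<dots> \<le> vnorm B (\<lambda>x. a x - b x) * (vnorm B a + vnorm B b)"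
    unfolding vnorm_def by (intro mult_left_mono L2_set_triangle_ineq L2_set_nonneg)
  finally show ?thesis using na nb by simp
qed

section \<open>Averaging over the candidates\<close>

text \<open>A state cannot have large membership parts at many candidates at once: the squared
  norms of the membership parts sum to at most \<open>4 |\<phi>|\<^sup>2\<close>, so by Cauchy--Schwarz their norms
  sum to at most \<open>2 \<surd>|Z| |\<phi>|\<close>.\<close>
lemma membership_parts_sum:
  assumes Z: "Z \<subseteq> bitstrs n"
  shows "(\<Sum>z\<in>Z. vnorm (full_basis n m w) (membership_part z \<phi>))
           \<le> 2 * sqrt (real (card Z)) * vnorm (full_basis n m w) \<phi>"
proof -
  let ?f = "\<lambda>z. vnorm (full_basis n m w) (membership_part z \<phi>)"
  have "(\<Sum>z\<in>Z. (?f z)\<^sup>2) \<le> (\<Sum>z\<in>Z. 4 * (\<Sum>r\<in>slices m w. (cmod (\<phi> (at_string r z)))\<^sup>2))"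
    using Z by (intro sum_mono membership_part_bound) auto
  also have "\<dots> = 4 * (\<Sum>r\<in>slices m w. \<Sum>z\<in>Z. (cmod (\<phi> (at_string r z)))\<^sup>2)"
    by (simp add: sum_distrib_left sum.swap[of _ Z])
  also have "\<dots> \<le> 4 * (\<Sum>r\<in>slices m w. \<Sum>s\<in>bitstrs n. (cmod (\<phi> (at_string r s)))\<^sup>2)"
    using Z by (intro mult_left_mono sum_mono sum_mono2) auto
  also have "\<dots> = (2 * vnorm (full_basis n m w) \<phi>)\<^sup>2"
    by (simp add: vnorm_sq_slices power_mult_distrib)
  finally have L2: "L2_set ?f Z \<le> 2 * vnorm (full_basis n m w) \<phi>"
    unfolding L2_set_def by (simp add: real_le_lsqrt)
  have "(\<Sum>z\<in>Z. ?f z) \<le> L2_set (\<lambda>_. 1) Z * L2_set ?f Z"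
    using L2_set_mult_ineq[of "\<lambda>_. 1" ?f Z] by simp
  also have "\<dots> \<le> sqrt (real (card Z)) * (2 * vnorm (full_basis n m w) \<phi>)"
    using L2 by (simp add: L2_set_constant mult_left_mono)
  finally show ?thesis by (simp add: mult_ac)
qed

lemma lower_bound_arithmetic:
  fixes K P T :: real
  assumes K: "K > 0" and P: "P > 0" "P\<^sup>2 \<le> 4 * K" and T: "T \<ge> 0"
    and main: "K / 6 \<le> T * (2 * sqrt K + K * (16 / P))"
  shows "P / 120 \<le> T"
proof -
  have "(2 * sqrt K)\<^sup>2 = 4 * K" using K by (simp add: power_mult_distrib)
  then have "P\<^sup>2 \<le> (2 * sqrt K)\<^sup>2" using P by simp
  then have "P \<le> 2 * sqrt K" by (rule power2_le_imp_le) (use K in simp)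
  then have "2 * sqrt K * P \<le> 4 * K"
    using mult_left_mono[of P "2 * sqrt K" "2 * sqrt K"] K by (simp add: power2_eq_square)
  have "K * (P / 6) = (K / 6) * P" by simp
  also have "\<dots> \<le> T * (2 * sqrt K + K * (16 / P)) * P"
    using main P by (intro mult_right_mono) auto
  also have "\<dots> = T * (2 * sqrt K * P + 16 * K)"
    using P by (simp add: algebra_simps)
  also have "\<dots> \<le> T * (20 * K)"
    using \<open>2 * sqrt K * P \<le> 4 * K\<close> T by (intro mult_left_mono) auto
  finally have "K * (P / 6) \<le> K * (20 * T)" by (simp add: algebra_simps)
  then show ?thesis using K by simp
qed

context
  fixes n m w T U Acc
  assumes n: "n \<ge> 1" and mn: "n \<le> m" and sol: "solves_multiple_components n m w T U Acc"
begin

abbreviation one_component_run :: "nat \<Rightarrow> qreg \<times> nat \<Rightarrow> complex" where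
  "one_component_run \<equiv> run_state n m w U (top_half n) (bitstrs m) xor_mixer"

lemma one_component_run_vnorm: "k \<le> T \<Longrightarrow> vnorm (full_basis n m w) (one_component_run k) = 1"
  using sol instance_oracle_unitary[OF order_refl _ n mn]
  by (intro run_state_vnorm) (auto simp: solves_multiple_components_def)

text \<open>Since the algorithm tells the instances apart, every candidate \<open>z\<close> must be probed.\<close>
lemma candidate_detected:
  assumes z: "z \<in> candidates n"
  shows "1/6 \<le> (\<Sum>k<T. vnorm (full_basis n m w) (membership_part z (one_component_run k)))
              + real T * (16 / 2 powr (real n / 2))"
proof -
  let ?B = "full_basis n m w" and ?Sz = "insert z (top_half n)"
  have Sz: "top_half n \<subseteq> ?Sz" "?Sz \<subseteq> top_half n \<union> candidates n" using z by auto
  have U: "\<And>k. k \<le> T \<Longrightarrow> unitary_on ?B (U k)" and Acc: "Acc \<subseteq> ?B"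
    using sol by (auto simp: solves_multiple_components_def)
  have Oz: "unitary_on ?B (full_oracle n m ?Sz (bitstrs m) xor_mixer)"
    by (rule instance_oracle_unitary[OF Sz n mn])
  have two: "card (insert (top_half n) ((\<lambda>z. {z}) ` (?Sz - top_half n))) = 2"
  proof -
    have "top_half n \<noteq> {z}" using candidate_not_top[OF z] by auto
    then show ?thesis using candidate_not_top[OF z] by (simp add: insert_Diff_if)
  qed
  have one: "card (insert (top_half n) ((\<lambda>z. {z}) ` (top_half n - top_half n))) = 1"
    by simp
  have "accept_prob n m w T U Acc ?Sz (bitstrs m) xor_mixer \<ge> 2/3"
    using sol instance_component_mixer[OF Sz n mn] two by (auto simp: solves_multiple_components_def)
  moreover have "accept_prob n m w T U Acc (top_half n) (bitstrs m) xor_mixer \<le> 1/3"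
    using sol instance_component_mixer[OF order_refl _ n mn] one by (auto simp: solves_multiple_components_def)
  ultimately have "1/6 \<le> vnorm ?B (\<lambda>x. run_state n m w U ?Sz (bitstrs m) xor_mixer T x - one_component_run T x)"
    using run_state_vnorm[OF _ U Oz order_refl] one_component_run_vnorm[OF order_refl] sol
    by (intro acceptance_gap_distance[OF finite_full_basis Acc])
       (auto simp: accept_prob_def solves_multiple_components_def)
  also have "\<dots> \<le> (\<Sum>k<T. vnorm ?B (\<lambda>x. apply_op ?B (full_oracle n m ?Sz (bitstrs m) xor_mixer) (one_component_run k) x
           - apply_op ?B (full_oracle n m (top_half n) (bitstrs m) xor_mixer) (one_component_run k) x))"
    by (rule hybrid_bound[OF U Oz order_refl])
  also have "\<dots> \<le> (\<Sum>k<T. vnorm ?B (membership_part z (one_component_run k)) + 16 / 2 powr (real n / 2))"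
  proof (rule sum_mono)
    fix k assume "k \<in> {..<T}"
    then have "vnorm ?B (one_component_run k) = 1" by (intro one_component_run_vnorm) simp
    then show "vnorm ?B (\<lambda>x. apply_op ?B (full_oracle n m ?Sz (bitstrs m) xor_mixer) (one_component_run k) x
           - apply_op ?B (full_oracle n m (top_half n) (bitstrs m) xor_mixer) (one_component_run k) x)
        \<le> vnorm ?B (membership_part z (one_component_run k)) + 16 / 2 powr (real n / 2)"
      using oracle_difference_bound[OF n mn z, of w "one_component_run k"] by simp
  qed
  finally show ?thesis by (simp add: sum.distrib)
qed

text \<open>Summing over all \<open>K\<close> candidates: \<open>K/6 \<le> T \<cdot> 2 \<surd>K + K \<cdot> T \<cdot> 16/2\<^sup>n\<^sup>/\<^sup>2\<close>, and \<open>K \<ge> 2\<^sup>n/4\<close>.\<close>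
lemma query_lower_bound:
  assumes n2: "n \<ge> 2"
  shows "2 powr (real n / 2) / 120 \<le> real T"
proof -
  define P where "P = 2 powr (real n / 2)"
  define K where "K = real (card (candidates n))"
  let ?B = "full_basis n m w"
  have "K * (1/6) = (\<Sum>z\<in>candidates n. 1/6)" by (simp add: K_def)
  also have "\<dots> \<le> (\<Sum>z\<in>candidates n. (\<Sum>k<T. vnorm ?B (membership_part z (one_component_run k)))
                        + real T * (16 / P))"
    unfolding P_def by (intro sum_mono candidate_detected)
  also have "\<dots> = (\<Sum>k<T. \<Sum>z\<in>candidates n. vnorm ?B (membership_part z (one_component_run k)))
                  + K * (real T * (16 / P))"
    by (simp add: sum.distrib K_def sum.swap[of _ "candidates n"])
  also have "\<dots> \<le> (\<Sum>k<T. 2 * sqrt K) + K * (real T * (16 / P))"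
  proof -
    have cand: "candidates n \<subseteq> bitstrs n" by (auto simp: candidates_def)
    have "(\<Sum>z\<in>candidates n. vnorm ?B (membership_part z (one_component_run k))) \<le> 2 * sqrt K"
      if "k < T" for k
      using membership_parts_sum[OF cand, of m w "one_component_run k"] one_component_run_vnorm[of k] that
      by (simp add: K_def)
    then show ?thesis by (intro add_mono sum_mono) auto
  qed
  finally have main: "K / 6 \<le> real T * (2 * sqrt K + K * (16 / P))"
    by (simp add: algebra_simps)
  have P: "P > 0" "P\<^sup>2 = 2 ^ n"
  proof -
    have "P\<^sup>2 = 2 powr (real n / 2 + real n / 2)" by (simp only: P_def power2_eq_square powr_add)
    then show "P\<^sup>2 = 2 ^ n" by (simp add: powr_realpow)
  qed (simp add: P_def)
  have "(2::real) ^ n = 2 * 2 ^ (n - 1)" using n by (cases n) simp_all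
  moreover have "(2::real) ^ 1 \<le> 2 ^ (n - 1)" using n2 by (intro power_increasing) auto
  moreover have "K = 2 ^ (n - 1) - 1"
    using card_candidates[OF n] by (simp add: K_def of_nat_diff)
  ultimately have "K > 0" "P\<^sup>2 \<le> 4 * K" using P by simp_all
  then show ?thesis using lower_bound_arithmetic[OF _ P(1) _ _ main] by (simp add: P_def)
qed

end

theorem mainTheorem10:
  shows "\<exists>c>0. \<exists>N d. \<forall>n\<ge>N. \<forall>m\<ge>n ^ d. \<forall>w T U Acc.
           solves_multiple_components n m w T U Acc \<longrightarrow> real T \<ge> c * 2 powr (real n / 2)"
proof -
  have "\<forall>n\<ge>2. \<forall>m\<ge>n ^ 1. \<forall>w T U Acc.
          solves_multiple_components n m w T U Acc \<longrightarrow> real T \<ge> 1/120 * 2 powr (real n / 2)"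
    using query_lower_bound by auto
  moreover have "(1/120 :: real) > 0" by simp
  ultimately show ?thesis by blast
qed

end
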